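(* Let $G$ be a topological group and let $H$ and $K$ be open subgroups of $G$ which are Hecke subgroups of $G$ and are commensurable. Then the discrete Hecke pair $(G,H)$ has property (RD) if and only if the discrete Hecke pair $(G,K)$ has property (RD).
   Context: $H$ is a Hecke subgroup of $G$ if $[H:H\cap xHx^{-1}]<\infty$ for all $x\in G$; $H,K$ are commensurable if $H\cap K$ has finite index in both. For a discrete Hecke pair $(G,H)$, the Hecke algebra $\mathcal H(G,H)$ consists of finitely supported functions $f$ on $H\backslash G$ which are right $H$-invariant ($f(Hxh)=f(Hx)$), with product $f*g(Hx)=\sum_{Hy\in H\backslash G}f(Hxy^{-1})g(Hy)$; the left regular representation $\lambda$ acts on $\ell^2(H\backslash G)$ by $\lambda(f)\xi=f*\xi$. A length function on $(G,H)$ is a Borel function $l:G\to[0,\infty)$ with $l(e)=0$, $l(g)=l(g^{-1})$, $l(gh)\le l(g)+l(h)$ and $l|_H=0$ (so $l$ is bi-$H$-invariant). $(G,H)$ has property (RD) if there are a length function $l$ on $(G,H)$ and $s,c>0$ such that $\|\lambda(f)\|\le c\big(\sum_{Hx\in H\backslash G}|f(Hx)|^2(1+l(x))^{2s}\big)^{1/2}$ for all $f\in\mathcal H(G,H)$. *)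

theory Defs
  imports "HOL-Analysis.Analysis" "HOL-Algebra.Algebra"
begin

definition topological_group :: "('a, 'b) monoid_scheme \<Rightarrow> 'a topology \<Rightarrow> bool" where
  "topological_group G T \<longleftrightarrow> group G \<and> topspace T = carrier G
     \<and> continuous_map (prod_topology T T) T (\<lambda>(x, y). x \<otimes>\<^bsub>G\<^esub> y)
     \<and> continuous_map T T (\<lambda>x. inv\<^bsub>G\<^esub> x)"

definition borel_of :: "'a topology \<Rightarrow> 'a measure" where
  "borel_of T = sigma (topspace T) (Collect (openin T))"

text \<open>Index [H : A] of a subgroup A in H (finite or not): the set of cosets A h, h in H.\<close>
definition index_cosets :: "('a, 'b) monoid_scheme \<Rightarrow> 'a set \<Rightarrow> 'a set \<Rightarrow> 'a set set" where
  "index_cosets G H A = (\<lambda>h. A #>\<^bsub>G\<^esub> h) ` H"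

definition conj_subgroup :: "('a, 'b) monoid_scheme \<Rightarrow> 'a \<Rightarrow> 'a set \<Rightarrow> 'a set" where
  "conj_subgroup G x H = (\<lambda>h. x \<otimes>\<^bsub>G\<^esub> h \<otimes>\<^bsub>G\<^esub> inv\<^bsub>G\<^esub> x) ` H"

definition hecke_subgroup :: "('a, 'b) monoid_scheme \<Rightarrow> 'a set \<Rightarrow> bool" where
  "hecke_subgroup G H \<longleftrightarrow> subgroup H G \<and>
     (\<forall>x\<in>carrier G. finite (index_cosets G H (H \<inter> conj_subgroup G x H)))"

definition commensurable :: "('a, 'b) monoid_scheme \<Rightarrow> 'a set \<Rightarrow> 'a set \<Rightarrow> bool" where
  "commensurable G H K \<longleftrightarrow> finite (index_cosets G H (H \<inter> K)) \<and> finite (index_cosets G K (H \<inter> K))"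

text \<open>Points of H\G are the right cosets H x (x in carrier G); a chosen representative.\<close>
definition coset_rep :: "'a set \<Rightarrow> 'a" where
  "coset_rep C = (SOME y. y \<in> C)"

definition hecke_algebra :: "('a, 'b) monoid_scheme \<Rightarrow> 'a set \<Rightarrow> ('a set \<Rightarrow> complex) set" where
  "hecke_algebra G H = {f. (\<forall>C. C \<notin> rcosets\<^bsub>G\<^esub> H \<longrightarrow> f C = 0)
      \<and> finite {C \<in> rcosets\<^bsub>G\<^esub> H. f C \<noteq> 0}
      \<and> (\<forall>x\<in>carrier G. \<forall>h\<in>H. f (H #>\<^bsub>G\<^esub> (x \<otimes>\<^bsub>G\<^esub> h)) = f (H #>\<^bsub>G\<^esub> x))}"

definition l2_cosets :: "('a, 'b) monoid_scheme \<Rightarrow> 'a set \<Rightarrow> ('a set \<Rightarrow> complex) set" where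
  "l2_cosets G H = {\<xi>. (\<forall>C. C \<notin> rcosets\<^bsub>G\<^esub> H \<longrightarrow> \<xi> C = 0)
      \<and> (\<lambda>C. (cmod (\<xi> C))\<^sup>2) summable_on (rcosets\<^bsub>G\<^esub> H)}"

definition l2_norm :: "('a, 'b) monoid_scheme \<Rightarrow> 'a set \<Rightarrow> ('a set \<Rightarrow> complex) \<Rightarrow> real" where
  "l2_norm G H \<xi> = sqrt (\<Sum>\<^sub>\<infinity>C\<in>rcosets\<^bsub>G\<^esub> H. (cmod (\<xi> C))\<^sup>2)"

definition hecke_conv :: "('a, 'b) monoid_scheme \<Rightarrow> 'a set \<Rightarrow> ('a set \<Rightarrow> complex) \<Rightarrow> ('a set \<Rightarrow> complex) \<Rightarrow> 'a set \<Rightarrow> complex" where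
  "hecke_conv G H f \<xi> C = (if C \<in> rcosets\<^bsub>G\<^esub> H then
      (\<Sum>\<^sub>\<infinity>D\<in>rcosets\<^bsub>G\<^esub> H. f (H #>\<^bsub>G\<^esub> (coset_rep C \<otimes>\<^bsub>G\<^esub> inv\<^bsub>G\<^esub> (coset_rep D))) * \<xi> D)
    else 0)"

text \<open>Length function on the pair (G,H) (values off carrier G are irrelevant).\<close>
definition length_function :: "('a, 'b) monoid_scheme \<Rightarrow> 'a topology \<Rightarrow> 'a set \<Rightarrow> ('a \<Rightarrow> real) \<Rightarrow> bool" where
  "length_function G T H l \<longleftrightarrow> l \<in> borel_measurable (borel_of T)
     \<and> (\<forall>x\<in>carrier G. l x \<ge> 0)
     \<and> l \<one>\<^bsub>G\<^esub> = 0
     \<and> (\<forall>x\<in>carrier G. l (inv\<^bsub>G\<^esub> x) = l x)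
     \<and> (\<forall>x\<in>carrier G. \<forall>y\<in>carrier G. l (x \<otimes>\<^bsub>G\<^esub> y) \<le> l x + l y)
     \<and> (\<forall>h\<in>H. l h = 0)"

text \<open>Property (RD): ||lambda(f)|| <= c * weighted l2 norm, with the operator norm
  written out as the bound ||f * xi|| <= (...) * ||xi|| for all xi in l^2(H\G).\<close>
definition property_RD :: "('a, 'b) monoid_scheme \<Rightarrow> 'a topology \<Rightarrow> 'a set \<Rightarrow> bool" where
  "property_RD G T H \<longleftrightarrow> (\<exists>l s c. length_function G T H l \<and> s > 0 \<and> c > 0 \<and>
     (\<forall>f\<in>hecke_algebra G H. \<forall>\<xi>\<in>l2_cosets G H.
        l2_norm G H (hecke_conv G H f \<xi>) \<le>
          c * sqrt (\<Sum>\<^sub>\<infinity>C\<in>rcosets\<^bsub>G\<^esub> H. (cmod (f C))\<^sup>2 * (1 + l (coset_rep C)) powr (2 * s))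
            * l2_norm G H \<xi>))"

end

theory Submission
  imports Defs
begin

text \<open>Both pairs are compared with (G, L) for L = H \<inter> K, which has finite index in H and in K,
  so it suffices to move (RD) down from H to L and up from L to K. Fix a finite set A of
  representatives of L\H and write x(C) for the chosen representative of C \<in> H\G; then
  (C, a) \<mapsto> L a x(C) identifies L\G with (H\G) \<times> A.

  Going up (L \<subseteq> K), functions on K\G are pulled back to L\G along this fibration. Norms grow by
  the factor card A ^ (1/2), convolutions by card A, and the weighted norm of a pulled-back function
  is controlled by the K-bi-invariant length x \<mapsto> max {l (a x b\<inverse>) | a, b \<in> A}, which vanishes on K.

  Going down (L \<subseteq> H, the length vanishing on H), the convolution f * \<xi> on L\G is dominated
  pointwise by F * X on H\G, where F (H x) is the sum of the values |f (L a x b\<inverse>)| over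
  a, b \<in> A and X is the fibrewise l2-norm of \<xi>. By Cauchy-Schwarz the weighted norm of F is at
  most card A ^ 3 times that of f. Only here is the Hecke property of H needed: it makes the
  convolution rows finite, so that the (RD) inequality on H\G also yields l2-summability.\<close>

section \<open>Infinite sums over finitely many pieces\<close>

lemma summable_on_finite_sum:
  fixes f :: "'i \<Rightarrow> 'x \<Rightarrow> 'c::banach"
  assumes "finite I" "\<And>i. i \<in> I \<Longrightarrow> f i summable_on Y"
  shows "(\<lambda>x. \<Sum>i\<in>I. f i x) summable_on Y"
  using assms by (induction I rule: finite_induct) (auto intro!: summable_on_add)

lemma infsum_finite_sum:
  fixes f :: "'i \<Rightarrow> 'x \<Rightarrow> 'c::banach"
  assumes "finite I" "\<And>i. i \<in> I \<Longrightarrow> f i summable_on Y"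
  shows "infsum (\<lambda>x. \<Sum>i\<in>I. f i x) Y = (\<Sum>i\<in>I. infsum (f i) Y)"
  using assms
proof (induction I rule: finite_induct)
  case (insert i I)
  have "infsum (\<lambda>x. \<Sum>j\<in>insert i I. f j x) Y = infsum (\<lambda>x. f i x + (\<Sum>j\<in>I. f j x)) Y"
    using insert by simp
  also have "\<dots> = infsum (f i) Y + infsum (\<lambda>x. \<Sum>j\<in>I. f j x) Y"
    using insert summable_on_finite_sum[of I f Y] by (intro infsum_add) auto
  finally show ?case using insert by simp
qed simp

lemma bij_betw_Times_singleton: "bij_betw (\<lambda>x. (x, a)) Y (Y \<times> {a})"
  by (auto simp: bij_betw_def inj_on_def)

lemma summable_on_Times_finite_iff:
  fixes k :: "'x \<times> 'y \<Rightarrow> 'c::banach"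
  assumes "finite A"
  shows "k summable_on (Y \<times> A) \<longleftrightarrow> (\<forall>a\<in>A. (\<lambda>x. k (x, a)) summable_on Y)"
  using assms
proof (induction A rule: finite_induct)
  case (insert a A)
  have split: "Y \<times> insert a A = Y \<times> {a} \<union> Y \<times> A" by auto
  have "k summable_on (Y \<times> insert a A) \<longleftrightarrow> k summable_on (Y \<times> {a}) \<and> k summable_on (Y \<times> A)"
    unfolding split using summable_on_Un_disjoint[of k "Y \<times> {a}" "Y \<times> A"]
      summable_on_subset_banach[of k "Y \<times> {a} \<union> Y \<times> A"] insert(2) by blast
  then show ?case
    using insert summable_on_reindex_bij_betw[OF bij_betw_Times_singleton[of a Y], of k] by auto
qed simp

lemma infsum_Times_finite:
  fixes k :: "'x \<times> 'y \<Rightarrow> 'c::banach"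
  assumes "finite A" "k summable_on (Y \<times> A)"
  shows "infsum k (Y \<times> A) = (\<Sum>a\<in>A. infsum (\<lambda>x. k (x, a)) Y)"
  using assms
proof (induction A rule: finite_induct)
  case (insert a A)
  have split: "Y \<times> insert a A = Y \<times> {a} \<union> Y \<times> A" by auto
  have parts: "k summable_on (Y \<times> {a})" "k summable_on (Y \<times> A)"
    using insert(4) summable_on_subset_banach split by blast+
  have "infsum k (Y \<times> insert a A) = infsum k (Y \<times> {a}) + infsum k (Y \<times> A)"
    unfolding split using parts insert(2) by (intro infsum_Un_disjoint) auto
  then show ?case
    using insert parts infsum_reindex_bij_betw[OF bij_betw_Times_singleton[of a Y], of k] by simp
qed simp

lemma summable_on_finite_support:
  assumes "finite F" "\<And>x. x \<in> S \<Longrightarrow> g x \<noteq> 0 \<Longrightarrow> x \<in> F"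
  shows "g summable_on S"
  by (rule finite_nonzero_values_imp_summable_on, rule finite_subset[OF _ assms(1)]) (use assms in auto)

lemma cmod_infsum_le:
  fixes g :: "'x \<Rightarrow> complex"
  shows "cmod (infsum g S) \<le> infsum (\<lambda>x. cmod (g x)) S"
proof (cases "g summable_on S")
  case True
  then show ?thesis
    by (intro norm_infsum_bound) (use summable_on_iff_abs_summable_on_complex in blast)
qed (simp add: infsum_not_exists infsum_nonneg)

lemma infsum_complex_of_real:
  fixes g :: "'x \<Rightarrow> real"
  shows "infsum (\<lambda>x. complex_of_real (g x)) S = complex_of_real (infsum g S)"
proof (cases "g summable_on S")
  case True
  then show ?thesis by (intro infsumI) (simp add: has_sum_of_real)
next
  case False
  have "\<not> (\<lambda>x. complex_of_real (g x)) summable_on S"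
    using summable_on_Re[of "\<lambda>x. complex_of_real (g x)" S] False by auto
  then show ?thesis using False by (simp add: infsum_not_exists)
qed

section \<open>Cosets, Hecke algebras and the (RD) inequality\<close>

definition weighted_sq :: "('a set \<Rightarrow> complex) \<Rightarrow> ('a \<Rightarrow> real) \<Rightarrow> real \<Rightarrow> 'a set \<Rightarrow> real" where
  "weighted_sq f l s C = (cmod (f C))\<^sup>2 * (1 + l (coset_rep C)) powr (2 * s)"

definition rd_weight ::
    "('a, 'b) monoid_scheme \<Rightarrow> 'a set \<Rightarrow> ('a set \<Rightarrow> complex) \<Rightarrow> ('a \<Rightarrow> real) \<Rightarrow> real \<Rightarrow> real" where
  "rd_weight G M f l s = (\<Sum>\<^sub>\<infinity>C\<in>rcosets\<^bsub>G\<^esub> M. weighted_sq f l s C)"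

definition rd_inequality ::
    "('a, 'b) monoid_scheme \<Rightarrow> 'a set \<Rightarrow> ('a \<Rightarrow> real) \<Rightarrow> real \<Rightarrow> real \<Rightarrow> bool" where
  "rd_inequality G M l s c \<longleftrightarrow> (\<forall>f\<in>hecke_algebra G M. \<forall>\<xi>\<in>l2_cosets G M.
      l2_norm G M (hecke_conv G M f \<xi>) \<le> c * sqrt (rd_weight G M f l s) * l2_norm G M \<xi>)"

lemma property_RD_iff_rd_inequality:
  "property_RD G T M \<longleftrightarrow> (\<exists>l s c. length_function G T M l \<and> s > 0 \<and> c > 0 \<and> rd_inequality G M l s c)"
  unfolding property_RD_def rd_inequality_def rd_weight_def weighted_sq_def by simp

lemma l2_norm_nonneg: "l2_norm G M \<xi> \<ge> 0"
  unfolding l2_norm_def by (simp add: infsum_nonneg)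

lemma rd_weight_nonneg: "(\<And>x. x \<in> carrier G \<Longrightarrow> l x \<ge> 0) \<Longrightarrow> rd_weight G M f l s \<ge> 0"
  unfolding rd_weight_def weighted_sq_def by (intro infsum_nonneg mult_nonneg_nonneg) auto

lemma l2_cosets_summable: "\<xi> \<in> l2_cosets G M \<Longrightarrow> (\<lambda>C. (cmod (\<xi> C))\<^sup>2) summable_on rcosets\<^bsub>G\<^esub> M"
  unfolding l2_cosets_def by blast

lemma hecke_algebra_support_finite:
  "f \<in> hecke_algebra G M \<Longrightarrow> finite {C \<in> rcosets\<^bsub>G\<^esub> M. f C \<noteq> 0}"
  unfolding hecke_algebra_def by blast

lemma hecke_algebra_right_invariant:
  "f \<in> hecke_algebra G M \<Longrightarrow> x \<in> carrier G \<Longrightarrow> h \<in> M \<Longrightarrow>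
     f (M #>\<^bsub>G\<^esub> (x \<otimes>\<^bsub>G\<^esub> h)) = f (M #>\<^bsub>G\<^esub> x)"
  unfolding hecke_algebra_def by blast

lemma weighted_sq_summable:
  "f \<in> hecke_algebra G M \<Longrightarrow> weighted_sq f l s summable_on rcosets\<^bsub>G\<^esub> M"
  by (rule summable_on_finite_support[OF hecke_algebra_support_finite]) (auto simp: weighted_sq_def)

lemma l2_cosets_restrict:
  fixes E :: "'a set set"
  assumes \<xi>: "\<xi> \<in> l2_cosets G M"
  defines "\<eta> \<equiv> \<lambda>D. if D \<in> E then \<xi> D else 0"
  shows "\<eta> \<in> l2_cosets G M" "l2_norm G M \<eta> \<le> l2_norm G M \<xi>"
proof -
  have le: "(cmod (\<eta> D))\<^sup>2 \<le> (cmod (\<xi> D))\<^sup>2" for D by (simp add: \<eta>_def)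
  have summ: "(\<lambda>D. (cmod (\<eta> D))\<^sup>2) summable_on rcosets\<^bsub>G\<^esub> M"
    using summable_on_comparison_test[OF l2_cosets_summable[OF \<xi>]] le by simp
  then show "\<eta> \<in> l2_cosets G M" using \<xi> unfolding l2_cosets_def \<eta>_def by auto
  show "l2_norm G M \<eta> \<le> l2_norm G M \<xi>"
    unfolding l2_norm_def using summ l2_cosets_summable[OF \<xi>] le
    by (intro real_sqrt_le_mono infsum_mono) auto
qed

context group
begin

lemma r_coset_mem_iff: "x \<in> M #> a \<longleftrightarrow> (\<exists>h\<in>M. x = h \<otimes> a)"
  by (auto simp: r_coset_def)

lemma r_coset_eq_iff:
  assumes "subgroup M G" "a \<in> carrier G" "b \<in> carrier G"
  shows "M #> a = M #> b \<longleftrightarrow> a \<in> M #> b"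
  using assms repr_independence rcos_self by metis

lemma r_coset_mult_left:
  assumes "subgroup M G" "h \<in> M" "a \<in> carrier G"
  shows "M #> (h \<otimes> a) = M #> a"
  using assms repr_independence[of "h \<otimes> a" M a] by (auto simp: r_coset_mem_iff)

lemma r_coset_assoc:
  assumes "subgroup M G" "a \<in> carrier G" "b \<in> carrier G"
  shows "M #> a #> b = M #> (a \<otimes> b)"
  using assms coset_mult_assoc subgroup.subset by metis

lemma subgroup_rcosetsI: "subgroup M G \<Longrightarrow> a \<in> carrier G \<Longrightarrow> M #> a \<in> rcosets M"
  by (auto simp: RCOSETS_def)

lemma coset_rep_mem:
  assumes "subgroup M G" "C \<in> rcosets M"
  shows "coset_rep C \<in> C" "coset_rep C \<in> carrier G" "M #> coset_rep C = C"
proof -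
  obtain a where a: "a \<in> carrier G" "C = M #> a" using assms(2) by (auto simp: RCOSETS_def)
  then have "a \<in> C" using assms(1) rcos_self by blast
  then show rep: "coset_rep C \<in> C" unfolding coset_rep_def by (rule someI)
  then show "coset_rep C \<in> carrier G"
    using a r_coset_subset_G[OF subgroup.subset[OF assms(1)]] by blast
  show "M #> coset_rep C = C" using rep a assms(1) repr_independence by metis
qed

lemma coset_rep_r_coset:
  assumes "subgroup M G" "a \<in> carrier G"
  obtains h where "h \<in> M" "coset_rep (M #> a) = h \<otimes> a"
  using coset_rep_mem(1)[OF assms(1) subgroup_rcosetsI[OF assms]] by (auto simp: r_coset_mem_iff)

lemma r_coset_eq_subgroup_mono:
  assumes "subgroup L G" "subgroup H G" "L \<subseteq> H" "a \<in> carrier G" "b \<in> carrier G"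
    and "L #> a = L #> b"
  shows "H #> a = H #> b"
  using assms r_coset_eq_iff[of L a b] r_coset_eq_iff[of H a b] by (auto simp: r_coset_mem_iff)

lemma r_coset_cancel_right:
  assumes "subgroup M G" "x \<in> carrier G" "y \<in> carrier G" "h \<in> carrier G"
    and "M #> (x \<otimes> h) = M #> (y \<otimes> h)"
  shows "M #> x = M #> y"
  using assms(5) r_coset_assoc[OF assms(1), of _ "inv h"] assms(1-4) by (metis inv_closed m_closed r_inv m_assoc r_one)

lemma bij_betw_r_coset_mult:
  assumes M: "subgroup M G" and g: "g \<in> carrier G"
  shows "bij_betw (\<lambda>C. C #> g) (rcosets M) (rcosets M)"
proof (rule bij_betwI[where g = "\<lambda>C. C #> inv g"])
  have mult: "C #> y \<in> rcosets M" and cancel: "C #> y #> inv y = C" "C #> inv y #> y = C"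
    if "C \<in> rcosets M" "y \<in> carrier G" for C y
    using that r_coset_assoc[OF M] subgroup_rcosetsI[OF M] by (auto simp: RCOSETS_def m_assoc)
  show "(\<lambda>C. C #> g) \<in> rcosets M \<rightarrow> rcosets M" "(\<lambda>C. C #> inv g) \<in> rcosets M \<rightarrow> rcosets M"
    using mult g by auto
  show "\<And>C. C \<in> rcosets M \<Longrightarrow> C #> g #> inv g = C" "\<And>C. C \<in> rcosets M \<Longrightarrow> C #> inv g #> g = C"
    using cancel g by auto
qed

lemma subadditive_mult_subgroup_le:
  fixes l :: "'a \<Rightarrow> real"
  assumes M: "subgroup M G"
    and sub: "\<And>x y. x \<in> carrier G \<Longrightarrow> y \<in> carrier G \<Longrightarrow> l (x \<otimes> y) \<le> l x + l y"
    and zero: "\<And>x. x \<in> M \<Longrightarrow> l x = 0"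
    and "k \<in> M" "k' \<in> M" "y \<in> carrier G"
  shows "l (k \<otimes> y \<otimes> k') \<le> l y"
proof -
  have car: "k \<in> carrier G" "k' \<in> carrier G" using assms subgroup.mem_carrier[OF M] by auto
  have "l (k \<otimes> y \<otimes> k') \<le> l (k \<otimes> y) + l k'" using sub[of "k \<otimes> y" k'] car assms by simp
  also have "\<dots> \<le> l k + l y + l k'" using sub[of k y] car assms by simp
  finally show ?thesis using zero assms by simp
qed

lemma subadditive_mult_subgroup_eq:
  fixes l :: "'a \<Rightarrow> real"
  assumes M: "subgroup M G"
    and sub: "\<And>x y. x \<in> carrier G \<Longrightarrow> y \<in> carrier G \<Longrightarrow> l (x \<otimes> y) \<le> l x + l y"
    and zero: "\<And>x. x \<in> M \<Longrightarrow> l x = 0"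
    and h: "h \<in> M" and h': "h' \<in> M" and y: "y \<in> carrier G"
  shows "l (h \<otimes> y \<otimes> h') = l y"
proof -
  have car: "h \<in> carrier G" "h' \<in> carrier G" using h h' subgroup.mem_carrier[OF M] by auto
  have "l y = l (inv h \<otimes> (h \<otimes> y \<otimes> h') \<otimes> inv h')"
    using car y by (simp add: m_assoc[symmetric]) (simp add: m_assoc)
  also have "\<dots> \<le> l (h \<otimes> y \<otimes> h')"
    using subadditive_mult_subgroup_le[OF M sub zero] subgroup.m_inv_closed[OF M] h h' car y by simp
  finally show ?thesis using subadditive_mult_subgroup_le[OF M sub zero h h' y] by simp
qed

lemma hecke_rcosets_double_coset_finite:
  assumes hecke: "hecke_subgroup G M" and u: "u \<in> carrier G" and x: "x \<in> carrier G"
  shows "finite ((\<lambda>h. M #> (u \<otimes> h \<otimes> x)) ` M)"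
proof -
  have M: "subgroup M G" using hecke unfolding hecke_subgroup_def by blast
  define J where "J = M \<inter> conj_subgroup G (inv u) M"
  have fin: "finite ((\<lambda>h. J #> h) ` M)"
    using hecke u unfolding hecke_subgroup_def index_cosets_def J_def by auto
  have one: "\<one> \<in> J"
  proof -
    have "\<one> = inv u \<otimes> \<one> \<otimes> inv (inv u)" using u by simp
    then show ?thesis unfolding J_def conj_subgroup_def using subgroup.one_closed[OF M] by blast
  qed
  have "(\<lambda>h. M #> (u \<otimes> h \<otimes> x)) ` M \<subseteq> (\<lambda>Q. M #> (u \<otimes> coset_rep Q \<otimes> x)) ` ((\<lambda>h. J #> h) ` M)"
  proof
    fix z assume "z \<in> (\<lambda>h. M #> (u \<otimes> h \<otimes> x)) ` M"
    then obtain h where h: "h \<in> M" "z = M #> (u \<otimes> h \<otimes> x)" by blast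
    have hc: "h \<in> carrier G" using subgroup.mem_carrier[OF M h(1)] .
    have "h \<in> J #> h" unfolding r_coset_mem_iff using one hc by force
    then have "coset_rep (J #> h) \<in> J #> h" unfolding coset_rep_def by (rule someI)
    then obtain j where j: "j \<in> J" "coset_rep (J #> h) = j \<otimes> h" unfolding r_coset_mem_iff by blast
    then obtain k where k: "k \<in> M" "j = inv u \<otimes> k \<otimes> inv (inv u)"
      unfolding J_def conj_subgroup_def by blast
    have kc: "k \<in> carrier G" using subgroup.mem_carrier[OF M k(1)] .
    have "u \<otimes> coset_rep (J #> h) \<otimes> x = k \<otimes> (u \<otimes> h \<otimes> x)"
      using j(2) k(2) kc u hc x by (simp add: m_assoc) (simp add: m_assoc[symmetric])
    then have "M #> (u \<otimes> coset_rep (J #> h) \<otimes> x) = z"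
      using r_coset_mult_left[OF M k(1), of "u \<otimes> h \<otimes> x"] h(2) u hc x by simp
    then show "z \<in> (\<lambda>Q. M #> (u \<otimes> coset_rep Q \<otimes> x)) ` ((\<lambda>h. J #> h) ` M)"
      using h(1) by blast
  qed
  then show ?thesis using finite_subset fin by blast
qed

lemma hecke_algebra_row_finite:
  assumes hecke: "hecke_subgroup G M" and f: "f \<in> hecke_algebra G M" and c: "c \<in> carrier G"
  shows "finite {D \<in> rcosets M. f (M #> (c \<otimes> inv coset_rep D)) \<noteq> 0}"
proof -
  have M: "subgroup M G" using hecke unfolding hecke_subgroup_def by blast
  define S where "S = {T \<in> rcosets M. f T \<noteq> 0}"
  have "{D \<in> rcosets M. f (M #> (c \<otimes> inv coset_rep D)) \<noteq> 0} \<subseteq>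
      (\<Union>T\<in>S. (\<lambda>h. M #> (inv (coset_rep T) \<otimes> h \<otimes> c)) ` M)"
  proof
    fix D assume D: "D \<in> {D \<in> rcosets M. f (M #> (c \<otimes> inv coset_rep D)) \<noteq> 0}"
    then have DM: "D \<in> rcosets M" by blast
    have d: "coset_rep D \<in> carrier G" using coset_rep_mem(2)[OF M DM] .
    define y where "y = c \<otimes> inv coset_rep D"
    have yc: "y \<in> carrier G" unfolding y_def using c d by simp
    have T: "M #> y \<in> S" unfolding S_def using D subgroup_rcosetsI[OF M yc] by (simp add: y_def)
    obtain h where h: "h \<in> M" "coset_rep (M #> y) = h \<otimes> y" using coset_rep_r_coset[OF M yc] .
    have "inv (coset_rep (M #> y)) \<otimes> h \<otimes> c = coset_rep D"
      using h(2) subgroup.mem_carrier[OF M h(1)] yc c d unfolding y_def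
      by (simp add: m_assoc inv_mult_group)
    then have "D = M #> (inv (coset_rep (M #> y)) \<otimes> h \<otimes> c)" using coset_rep_mem(3)[OF M DM] by simp
    then show "D \<in> (\<Union>T\<in>S. (\<lambda>h. M #> (inv (coset_rep T) \<otimes> h \<otimes> c)) ` M)" using T h(1) by blast
  qed
  moreover have "finite (\<Union>T\<in>S. (\<lambda>h. M #> (inv (coset_rep T) \<otimes> h \<otimes> c)) ` M)"
  proof (rule finite_UN_I)
    show "finite S" using hecke_algebra_support_finite[OF f] unfolding S_def .
    fix T assume "T \<in> S"
    then have "coset_rep T \<in> carrier G" unfolding S_def using coset_rep_mem(2)[OF M] by blast
    then show "finite ((\<lambda>h. M #> (inv (coset_rep T) \<otimes> h \<otimes> c)) ` M)"
      using hecke_rcosets_double_coset_finite[OF hecke] c by simp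
  qed
  ultimately show ?thesis using finite_subset by blast
qed

lemma hecke_conv_support_finite:
  assumes M: "subgroup M G" and f: "f \<in> hecke_algebra G M"
    and Z: "finite {D \<in> rcosets M. Z D \<noteq> 0}"
  shows "finite {C \<in> rcosets M. hecke_conv G M f Z C \<noteq> 0}"
proof -
  define S where "S = {T \<in> rcosets M. f T \<noteq> 0}"
  define E where "E = {D \<in> rcosets M. Z D \<noteq> 0}"
  have "{C \<in> rcosets M. hecke_conv G M f Z C \<noteq> 0} \<subseteq> (\<lambda>(T, D). T #> coset_rep D) ` (S \<times> E)"
  proof
    fix C assume C: "C \<in> {C \<in> rcosets M. hecke_conv G M f Z C \<noteq> 0}"
    then have CM: "C \<in> rcosets M" by blast
    have "(\<Sum>\<^sub>\<infinity>D\<in>rcosets M. f (M #> (coset_rep C \<otimes> inv coset_rep D)) * Z D) \<noteq> 0"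
      using C unfolding hecke_conv_def by auto
    then obtain D where D: "D \<in> rcosets M" "f (M #> (coset_rep C \<otimes> inv coset_rep D)) * Z D \<noteq> 0"
      using infsum_0[of "rcosets M" "\<lambda>D. f (M #> (coset_rep C \<otimes> inv coset_rep D)) * Z D"] by blast
    have cd: "coset_rep C \<in> carrier G" "coset_rep D \<in> carrier G"
      using coset_rep_mem(2)[OF M] CM D(1) by auto
    have "M #> (coset_rep C \<otimes> inv coset_rep D) #> coset_rep D = C"
      using r_coset_assoc[OF M] cd coset_rep_mem(3)[OF M CM] by (simp add: m_assoc)
    moreover have "M #> (coset_rep C \<otimes> inv coset_rep D) \<in> S" "D \<in> E"
      using D subgroup_rcosetsI[OF M] cd unfolding S_def E_def by auto
    ultimately show "C \<in> (\<lambda>(T, D). T #> coset_rep D) ` (S \<times> E)" by force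
  qed
  moreover have "finite (S \<times> E)"
    using hecke_algebra_support_finite[OF f] Z unfolding S_def E_def by simp
  ultimately show ?thesis using finite_subset by blast
qed

lemma hecke_conv_cong_row:
  assumes "\<And>D. D \<in> rcosets M \<Longrightarrow> f (M #> (coset_rep C \<otimes> inv coset_rep D)) \<noteq> 0 \<Longrightarrow> \<xi> D = \<eta> D"
  shows "hecke_conv G M f \<xi> C = hecke_conv G M f \<eta> C"
proof -
  have "f (M #> (coset_rep C \<otimes> inv coset_rep D)) * \<xi> D = f (M #> (coset_rep C \<otimes> inv coset_rep D)) * \<eta> D"
    if "D \<in> rcosets M" for D
    using assms[OF that] by (cases "f (M #> (coset_rep C \<otimes> inv coset_rep D)) = 0") auto
  then show ?thesis unfolding hecke_conv_def by (auto intro!: infsum_cong)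
qed

text \<open>On a Hecke subgroup every row of the convolution is finite, so truncating \<xi> to finitely
  many cosets leaves finitely many values of f * \<xi> unchanged and makes f * \<xi> finitely
  supported; the (RD) inequality for the truncations bounds all finite partial sums.\<close>

lemma rd_inequality_conv_summable:
  assumes hecke: "hecke_subgroup G M" and rd: "rd_inequality G M l s c"
    and f: "f \<in> hecke_algebra G M" and \<xi>: "\<xi> \<in> l2_cosets G M"
  shows "(\<lambda>C. (cmod (hecke_conv G M f \<xi> C))\<^sup>2) summable_on rcosets M"
proof (rule nonneg_bdd_above_summable_on)
  have M: "subgroup M G" using hecke unfolding hecke_subgroup_def by blast
  define B where "B = (c * sqrt (rd_weight G M f l s) * l2_norm G M \<xi>)\<^sup>2"
  have "(\<Sum>C\<in>E. (cmod (hecke_conv G M f \<xi> C))\<^sup>2) \<le> B" if E: "E \<subseteq> rcosets M" "finite E" for E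
  proof -
    define R where "R = (\<Union>C\<in>E. {D \<in> rcosets M. f (M #> (coset_rep C \<otimes> inv coset_rep D)) \<noteq> 0})"
    define \<eta> where "\<eta> D = (if D \<in> R then \<xi> D else 0)" for D
    have finR: "finite R"
      unfolding R_def using E hecke_algebra_row_finite[OF hecke f] coset_rep_mem(2)[OF M]
      by (intro finite_UN_I) auto
    have \<eta>: "\<eta> \<in> l2_cosets G M" "l2_norm G M \<eta> \<le> l2_norm G M \<xi>"
      using l2_cosets_restrict[OF \<xi>, of R] unfolding \<eta>_def by auto
    have same: "hecke_conv G M f \<xi> C = hecke_conv G M f \<eta> C" if "C \<in> E" for C
      using that by (intro hecke_conv_cong_row) (auto simp: \<eta>_def R_def)
    have "finite {D \<in> rcosets M. \<eta> D \<noteq> 0}" by (rule finite_subset[OF _ finR]) (auto simp: \<eta>_def)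
    then have summ: "(\<lambda>C. (cmod (hecke_conv G M f \<eta> C))\<^sup>2) summable_on rcosets M"
      by (intro summable_on_finite_support[OF hecke_conv_support_finite[OF M f]]) auto
    have "(\<Sum>C\<in>E. (cmod (hecke_conv G M f \<xi> C))\<^sup>2) = (\<Sum>C\<in>E. (cmod (hecke_conv G M f \<eta> C))\<^sup>2)"
      using same by simp
    also have "\<dots> \<le> (\<Sum>\<^sub>\<infinity>C\<in>rcosets M. (cmod (hecke_conv G M f \<eta> C))\<^sup>2)"
      by (rule finite_sum_le_infsum[OF summ E(2,1)]) simp
    also have "\<dots> = (l2_norm G M (hecke_conv G M f \<eta>))\<^sup>2"
      unfolding l2_norm_def by (simp add: infsum_nonneg)
    also have "\<dots> \<le> (c * sqrt (rd_weight G M f l s) * l2_norm G M \<eta>)\<^sup>2"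
      using rd f \<eta>(1) l2_norm_nonneg unfolding rd_inequality_def by (intro power_mono) auto
    also have "\<dots> \<le> B"
      unfolding B_def power_mult_distrib using \<eta>(2) l2_norm_nonneg
      by (intro mult_left_mono power_mono) auto
    finally show ?thesis .
  qed
  then show "bdd_above (sum (\<lambda>C. (cmod (hecke_conv G M f \<xi> C))\<^sup>2) ` {E. E \<subseteq> rcosets M \<and> finite E})"
    by (auto intro!: bdd_aboveI2)
qed simp

end

section \<open>Measurability in a topological group\<close>

lemma topological_group_translation_continuous:
  assumes tg: "topological_group G T" and a: "a \<in> carrier G" and b: "b \<in> carrier G"
  shows "continuous_map T T (\<lambda>x. a \<otimes>\<^bsub>G\<^esub> x \<otimes>\<^bsub>G\<^esub> b)"
proof -
  have mult: "continuous_map (prod_topology T T) T (\<lambda>(x, y). x \<otimes>\<^bsub>G\<^esub> y)" and space: "topspace T = carrier G"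
    using tg unfolding topological_group_def by auto
  have id: "continuous_map T T (\<lambda>x. x)" using continuous_map_id unfolding id_def .
  have left: "continuous_map T T (\<lambda>x. a \<otimes>\<^bsub>G\<^esub> x)"
    using continuous_map_compose[OF continuous_map_pairedI[of T T "\<lambda>x. a" T "\<lambda>x. x"] mult] a space id
    by (simp add: o_def)
  have right: "continuous_map T T (\<lambda>y. y \<otimes>\<^bsub>G\<^esub> b)"
    using continuous_map_compose[OF continuous_map_pairedI[of T T "\<lambda>x. x" T "\<lambda>x. b"] mult] b space id
    by (simp add: o_def)
  show ?thesis using continuous_map_compose[OF left right] by (simp add: o_def)
qed

lemma openin_in_borel_of: "openin T U \<Longrightarrow> U \<in> sets (borel_of T)"
  unfolding borel_of_def using openin_subset by (subst sets_measure_of) (auto intro: sigma_sets.Basic)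

lemma space_borel_of: "space (borel_of T) = topspace T"
  unfolding borel_of_def using openin_subset by (subst space_measure_of) auto

lemma continuous_map_measurable_borel_of:
  assumes "continuous_map T T g"
  shows "g \<in> measurable (borel_of T) (borel_of T)"
  unfolding borel_of_def
proof (rule measurable_measure_of)
  show "Collect (openin T) \<subseteq> Pow (topspace T)" using openin_subset by auto
  show "g \<in> space (sigma (topspace T) (Collect (openin T))) \<rightarrow> topspace T"
    using assms space_borel_of[of T] unfolding borel_of_def continuous_map_def by auto
  fix U assume "U \<in> Collect (openin T)"
  then have "openin T {x \<in> topspace T. g x \<in> U}" using openin_continuous_map_preimage assms by blast
  moreover have "g -` U \<inter> space (sigma (topspace T) (Collect (openin T))) = {x \<in> topspace T. g x \<in> U}"
    using space_borel_of[of T] unfolding borel_of_def by auto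
  ultimately show "g -` U \<inter> space (sigma (topspace T) (Collect (openin T)))
      \<in> sets (sigma (topspace T) (Collect (openin T)))"
    using openin_in_borel_of[of T] unfolding borel_of_def by simp
qed

section \<open>A transversal of L\H\<close>

locale coset_transversal = group G for G (structure) +
  fixes H L A
  assumes H: "subgroup H G" and L: "subgroup L G" and L_subset_H: "L \<subseteq> H"
    and finite_A: "finite A" and A_subset_H: "A \<subseteq> H"
    and A_covers: "\<And>h. h \<in> H \<Longrightarrow> \<exists>a\<in>A. L #> h = L #> a"
    and A_distinct: "\<And>a b. a \<in> A \<Longrightarrow> b \<in> A \<Longrightarrow> L #> a = L #> b \<Longrightarrow> a = b"
begin

lemma H_carrier: "x \<in> H \<Longrightarrow> x \<in> carrier G"
  by (rule subgroup.mem_carrier[OF H])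

lemma L_carrier: "x \<in> L \<Longrightarrow> x \<in> carrier G"
  by (rule subgroup.mem_carrier[OF L])

lemma A_in_H: "a \<in> A \<Longrightarrow> a \<in> H"
  using A_subset_H by (rule subsetD)

lemma A_carrier: "a \<in> A \<Longrightarrow> a \<in> carrier G"
  by (rule H_carrier, rule A_in_H)

lemma transversal_decomp:
  assumes "h \<in> H"
  obtains a k where "a \<in> A" "k \<in> L" "h = k \<otimes> a"
proof -
  obtain a where a: "a \<in> A" "L #> h = L #> a" using A_covers assms by blast
  then have "h \<in> L #> a" using r_coset_eq_iff[OF L H_carrier[OF assms] A_carrier[OF a(1)]] by simp
  then show ?thesis using that a(1) by (auto simp: r_coset_mem_iff)
qed

lemma card_A_pos: "card A > 0"
  using transversal_decomp[OF subgroup.one_closed[OF H]] finite_A card_gt_0_iff by blast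

lemma coset_rep_H_carrier: "C \<in> rcosets H \<Longrightarrow> coset_rep C \<in> carrier G"
  using coset_rep_mem(2)[OF H] .

definition fibre_coset :: "'a set \<Rightarrow> 'a \<Rightarrow> 'a set" where
  "fibre_coset C a = L #> (a \<otimes> coset_rep C)"

lemma fibre_coset_in_rcosets: "C \<in> rcosets H \<Longrightarrow> a \<in> A \<Longrightarrow> fibre_coset C a \<in> rcosets L"
  unfolding fibre_coset_def using subgroup_rcosetsI[OF L] coset_rep_H_carrier A_carrier by blast

lemma coset_rep_fibre_coset:
  assumes "C \<in> rcosets H" "a \<in> A"
  obtains k where "k \<in> L" "coset_rep (fibre_coset C a) = k \<otimes> (a \<otimes> coset_rep C)"
  unfolding fibre_coset_def
  using coset_rep_r_coset[OF L, of "a \<otimes> coset_rep C"] coset_rep_H_carrier[OF assms(1)] A_carrier[OF assms(2)]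
  by blast

lemma H_r_coset_transversal: "C \<in> rcosets H \<Longrightarrow> a \<in> A \<Longrightarrow> H #> (a \<otimes> coset_rep C) = C"
  using r_coset_mult_left[OF H A_in_H coset_rep_H_carrier] coset_rep_mem(3)[OF H] by metis

lemma H_r_coset_coset_rep_L:
  assumes "x \<in> carrier G"
  shows "H #> coset_rep (L #> x) = H #> x"
proof -
  obtain k where "k \<in> L" "coset_rep (L #> x) = k \<otimes> x" using coset_rep_r_coset[OF L assms] .
  then show ?thesis using r_coset_mult_left[OF H, of k x] L_subset_H assms by auto
qed

lemma H_r_coset_fibre_coset:
  assumes "C \<in> rcosets H" "a \<in> A"
  shows "H #> coset_rep (fibre_coset C a) = C"
  unfolding fibre_coset_def
  using H_r_coset_coset_rep_L H_r_coset_transversal assms coset_rep_H_carrier A_carrier by simp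

lemma fibre_coset_inj:
  assumes "C \<in> rcosets H" "C' \<in> rcosets H" "a \<in> A" "b \<in> A" "fibre_coset C a = fibre_coset C' b"
  shows "C = C' \<and> a = b"
proof -
  have c: "coset_rep C \<in> carrier G" "coset_rep C' \<in> carrier G" using assms coset_rep_H_carrier by auto
  have "H #> (a \<otimes> coset_rep C) = H #> (b \<otimes> coset_rep C')"
    using r_coset_eq_subgroup_mono[OF L H L_subset_H _ _ assms(5)[unfolded fibre_coset_def]]
      assms c A_carrier by simp
  then have same: "C = C'" using H_r_coset_transversal assms by simp
  then have "L #> (a \<otimes> coset_rep C) = L #> (b \<otimes> coset_rep C)"
    using assms(5) unfolding fibre_coset_def by simp
  then have "L #> a = L #> b"
    using r_coset_cancel_right[OF L] A_carrier assms(3,4) c(1) by blast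
  then show ?thesis using A_distinct[OF assms(3,4)] same by simp
qed

lemma fibre_coset_surj:
  assumes "C' \<in> rcosets L"
  shows "\<exists>C\<in>rcosets H. \<exists>a\<in>A. C' = fibre_coset C a"
proof -
  obtain x where x: "x \<in> carrier G" "C' = L #> x" using assms by (auto simp: RCOSETS_def)
  define C where "C = H #> x"
  have C: "C \<in> rcosets H" unfolding C_def using subgroup_rcosetsI[OF H x(1)] .
  obtain h where h: "h \<in> H" "coset_rep C = h \<otimes> x" using coset_rep_r_coset[OF H x(1)] C_def by blast
  obtain a k where ak: "a \<in> A" "k \<in> L" "inv h = k \<otimes> a"
    using transversal_decomp[OF subgroup.m_inv_closed[OF H h(1)]] .
  have hc: "h \<in> carrier G" using H_carrier[OF h(1)] .
  have "x = inv h \<otimes> coset_rep C" using h hc x by (simp add: m_assoc[symmetric])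
  also have "\<dots> = k \<otimes> (a \<otimes> coset_rep C)"
    using ak L_carrier A_carrier coset_rep_H_carrier[OF C] by (simp add: m_assoc)
  finally have "L #> x = L #> (a \<otimes> coset_rep C)"
    using r_coset_mult_left[OF L ak(2)] A_carrier[OF ak(1)] coset_rep_H_carrier[OF C] by simp
  then show ?thesis using C ak(1) x(2) unfolding fibre_coset_def by blast
qed

lemma bij_betw_fibre_coset: "bij_betw (\<lambda>(C, a). fibre_coset C a) ((rcosets H) \<times> A) (rcosets L)"
proof -
  have "inj_on (\<lambda>(C, a). fibre_coset C a) ((rcosets H) \<times> A)"
  proof (rule inj_onI)
    fix p q assume "p \<in> (rcosets H) \<times> A" "q \<in> (rcosets H) \<times> A"
      "(\<lambda>(C, a). fibre_coset C a) p = (\<lambda>(C, a). fibre_coset C a) q"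
    then show "p = q" using fibre_coset_inj by (cases p, cases q) (simp, metis)
  qed
  moreover have "(\<lambda>(C, a). fibre_coset C a) ` ((rcosets H) \<times> A) = rcosets L"
  proof
    show "(\<lambda>(C, a). fibre_coset C a) ` ((rcosets H) \<times> A) \<subseteq> rcosets L"
      using fibre_coset_in_rcosets by auto
    show "rcosets L \<subseteq> (\<lambda>(C, a). fibre_coset C a) ` ((rcosets H) \<times> A)"
      using fibre_coset_surj by force
  qed
  ultimately show ?thesis by (simp add: bij_betw_def)
qed

lemma summable_on_fibres_iff:
  fixes g :: "'a set \<Rightarrow> 'c::banach"
  shows "g summable_on rcosets L \<longleftrightarrow> (\<forall>a\<in>A. (\<lambda>C. g (fibre_coset C a)) summable_on rcosets H)"
  using summable_on_reindex_bij_betw[OF bij_betw_fibre_coset, of g]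
    summable_on_Times_finite_iff[OF finite_A, of "\<lambda>p. g (case p of (C, a) \<Rightarrow> fibre_coset C a)"]
  by simp

lemma infsum_fibres:
  fixes g :: "'a set \<Rightarrow> 'c::banach"
  assumes "g summable_on rcosets L"
  shows "infsum g (rcosets L) = (\<Sum>a\<in>A. infsum (\<lambda>C. g (fibre_coset C a)) (rcosets H))"
proof -
  have summ: "(\<lambda>p. g (case p of (C, a) \<Rightarrow> fibre_coset C a)) summable_on ((rcosets H) \<times> A)"
    using summable_on_reindex_bij_betw[OF bij_betw_fibre_coset, of g] assms by simp
  have "infsum (\<lambda>p. g (case p of (C, a) \<Rightarrow> fibre_coset C a)) ((rcosets H) \<times> A)
      = (\<Sum>a\<in>A. infsum (\<lambda>C. g (fibre_coset C a)) (rcosets H))"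
    using infsum_Times_finite[OF finite_A summ] by simp
  then show ?thesis using infsum_reindex_bij_betw[OF bij_betw_fibre_coset, of g] by simp
qed

lemma fibre_constant:
  fixes g :: "'a set \<Rightarrow> 'c::banach"
  assumes "\<And>C a. C \<in> rcosets H \<Longrightarrow> a \<in> A \<Longrightarrow> g (fibre_coset C a) = k C"
  shows "g summable_on rcosets L \<longleftrightarrow> k summable_on rcosets H"
    and "infsum g (rcosets L) = real (card A) *\<^sub>R infsum k (rcosets H)"
proof -
  have same: "\<And>a. a \<in> A \<Longrightarrow> ((\<lambda>C. g (fibre_coset C a)) summable_on rcosets H \<longleftrightarrow> k summable_on rcosets H)
       \<and> infsum (\<lambda>C. g (fibre_coset C a)) (rcosets H) = infsum k (rcosets H)"
    using assms by (intro conjI summable_on_cong infsum_cong) auto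
  show summ: "g summable_on rcosets L \<longleftrightarrow> k summable_on rcosets H"
    using summable_on_fibres_iff[of g] same card_A_pos by (auto simp: card_gt_0_iff)
  show "infsum g (rcosets L) = real (card A) *\<^sub>R infsum k (rcosets H)"
  proof (cases "k summable_on rcosets H")
    case True
    then show ?thesis using infsum_fibres[of g] summ same by (simp add: sum_constant_scaleR)
  qed (use summ infsum_not_exists[of g] infsum_not_exists[of k] in simp)
qed

lemma transversal_perm:
  assumes "h \<in> H"
  obtains \<sigma> where "bij_betw \<sigma> A A" "\<And>a. a \<in> A \<Longrightarrow> \<exists>k\<in>L. a \<otimes> h = k \<otimes> \<sigma> a"
proof -
  have "\<forall>a\<in>A. \<exists>a'. a' \<in> A \<and> (\<exists>k\<in>L. a \<otimes> h = k \<otimes> a')"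
  proof
    fix a assume "a \<in> A"
    then obtain a' k where "a' \<in> A" "k \<in> L" "a \<otimes> h = k \<otimes> a'"
      using transversal_decomp[OF subgroup.m_closed[OF H A_in_H assms]] by blast
    then show "\<exists>a'. a' \<in> A \<and> (\<exists>k\<in>L. a \<otimes> h = k \<otimes> a')" by blast
  qed
  then obtain \<sigma> where \<sigma>: "\<And>a. a \<in> A \<Longrightarrow> \<sigma> a \<in> A \<and> (\<exists>k\<in>L. a \<otimes> h = k \<otimes> \<sigma> a)"
    by (auto dest!: bchoice)
  have same_coset: "L #> (a \<otimes> h) = L #> \<sigma> a" if a: "a \<in> A" for a
  proof -
    obtain k where "k \<in> L" "a \<otimes> h = k \<otimes> \<sigma> a" using \<sigma>[OF a] by blast
    then show ?thesis using r_coset_mult_left[OF L, of k "\<sigma> a"] A_carrier \<sigma>[OF a] by simp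
  qed
  have "inj_on \<sigma> A"
  proof (rule inj_onI)
    fix a b assume ab: "a \<in> A" "b \<in> A" "\<sigma> a = \<sigma> b"
    then have "L #> (a \<otimes> h) = L #> (b \<otimes> h)" using same_coset by simp
    then have "L #> a = L #> b"
      using r_coset_cancel_right[OF L] A_carrier ab H_carrier[OF assms] by blast
    then show "a = b" using A_distinct ab by blast
  qed
  moreover have "\<sigma> ` A = A" using endo_inj_surj[OF finite_A _ calculation] \<sigma> by blast
  ultimately show ?thesis using that \<sigma> by (simp add: bij_betw_def)
qed

lemma sum_transversal_mult_left:
  assumes "h \<in> H" "w \<in> carrier G"
    and inv: "\<And>k y. k \<in> L \<Longrightarrow> y \<in> carrier G \<Longrightarrow> \<Psi> (k \<otimes> y) = \<Psi> y"
  shows "(\<Sum>a\<in>A. \<Psi> (a \<otimes> h \<otimes> w)) = (\<Sum>a\<in>A. \<Psi> (a \<otimes> w))"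
proof -
  obtain \<sigma> where \<sigma>: "bij_betw \<sigma> A A" "\<And>a. a \<in> A \<Longrightarrow> \<exists>k\<in>L. a \<otimes> h = k \<otimes> \<sigma> a"
    using transversal_perm[OF assms(1)] by blast
  have "\<Psi> (a \<otimes> h \<otimes> w) = \<Psi> (\<sigma> a \<otimes> w)" if a: "a \<in> A" for a
  proof -
    obtain k where k: "k \<in> L" "a \<otimes> h = k \<otimes> \<sigma> a" using \<sigma>(2)[OF a] by blast
    have "\<sigma> a \<in> carrier G" using A_carrier bij_betwE[OF \<sigma>(1)] a by blast
    then have "a \<otimes> h \<otimes> w = k \<otimes> (\<sigma> a \<otimes> w)" using k L_carrier assms(2) by (simp add: m_assoc)
    then show ?thesis using inv[OF k(1)] \<open>\<sigma> a \<in> carrier G\<close> assms(2) by simp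
  qed
  then have "(\<Sum>a\<in>A. \<Psi> (a \<otimes> h \<otimes> w)) = (\<Sum>a\<in>A. \<Psi> (\<sigma> a \<otimes> w))" by (rule sum.cong[OF refl])
  also have "\<dots> = (\<Sum>a\<in>A. \<Psi> (a \<otimes> w))" using sum.reindex_bij_betw[OF \<sigma>(1), of "\<lambda>a. \<Psi> (a \<otimes> w)"] .
  finally show ?thesis .
qed

lemma sum_transversal_inv_mult_right:
  assumes "h \<in> H" "v \<in> carrier G"
    and inv: "\<And>k y. k \<in> L \<Longrightarrow> y \<in> carrier G \<Longrightarrow> \<Phi> (y \<otimes> k) = \<Phi> y"
  shows "(\<Sum>b\<in>A. \<Phi> (v \<otimes> h \<otimes> inv b)) = (\<Sum>b\<in>A. \<Phi> (v \<otimes> inv b))"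
proof -
  have hc: "h \<in> carrier G" using H_carrier[OF assms(1)] .
  obtain \<sigma> where \<sigma>: "bij_betw \<sigma> A A" "\<And>a. a \<in> A \<Longrightarrow> \<exists>k\<in>L. a \<otimes> inv h = k \<otimes> \<sigma> a"
    using transversal_perm[OF subgroup.m_inv_closed[OF H assms(1)]] by blast
  have "\<Phi> (v \<otimes> h \<otimes> inv b) = \<Phi> (v \<otimes> inv (\<sigma> b))" if b: "b \<in> A" for b
  proof -
    obtain k where k: "k \<in> L" "b \<otimes> inv h = k \<otimes> \<sigma> b" using \<sigma>(2)[OF b] by blast
    have car: "k \<in> carrier G" "b \<in> carrier G" "\<sigma> b \<in> carrier G"
      using L_carrier k A_carrier bij_betwE[OF \<sigma>(1)] b by auto
    have "\<sigma> b = inv k \<otimes> (b \<otimes> inv h)" using k car hc by (simp add: m_assoc[symmetric])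
    then have "inv (\<sigma> b) = h \<otimes> inv b \<otimes> k" using car hc by (simp add: inv_mult_group m_assoc)
    then have "v \<otimes> inv (\<sigma> b) = (v \<otimes> h \<otimes> inv b) \<otimes> k" using car hc assms(2) by (simp add: m_assoc)
    then show ?thesis using inv[OF k(1), of "v \<otimes> h \<otimes> inv b"] car hc assms(2) by simp
  qed
  then have "(\<Sum>b\<in>A. \<Phi> (v \<otimes> h \<otimes> inv b)) = (\<Sum>b\<in>A. \<Phi> (v \<otimes> inv (\<sigma> b)))" by (rule sum.cong[OF refl])
  also have "\<dots> = (\<Sum>b\<in>A. \<Phi> (v \<otimes> inv b))" using sum.reindex_bij_betw[OF \<sigma>(1), of "\<lambda>b. \<Phi> (v \<otimes> inv b)"] .
  finally show ?thesis .
qed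

definition pullback :: "('a set \<Rightarrow> complex) \<Rightarrow> 'a set \<Rightarrow> complex" where
  "pullback f C' = (if C' \<in> rcosets L then f (H #> coset_rep C') else 0)"

lemma pullback_fibre_coset: "C \<in> rcosets H \<Longrightarrow> a \<in> A \<Longrightarrow> pullback f (fibre_coset C a) = f C"
  unfolding pullback_def using fibre_coset_in_rcosets H_r_coset_fibre_coset by simp

lemma pullback_r_coset: "x \<in> carrier G \<Longrightarrow> pullback f (L #> x) = f (H #> x)"
  unfolding pullback_def using subgroup_rcosetsI[OF L] H_r_coset_coset_rep_L by simp

lemma pullback_hecke_algebra:
  assumes f: "f \<in> hecke_algebra G H"
  shows "pullback f \<in> hecke_algebra G L"
proof -
  have sub: "{C' \<in> rcosets L. pullback f C' \<noteq> 0} \<subseteq>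
      (\<lambda>(C, a). fibre_coset C a) ` ({C \<in> rcosets H. f C \<noteq> 0} \<times> A)"
  proof
    fix C' assume C': "C' \<in> {C' \<in> rcosets L. pullback f C' \<noteq> 0}"
    then obtain C a where Ca: "C \<in> rcosets H" "a \<in> A" "C' = fibre_coset C a"
      using fibre_coset_surj by blast
    then have "f C \<noteq> 0" using C' pullback_fibre_coset[OF Ca(1,2)] by simp
    then show "C' \<in> (\<lambda>(C, a). fibre_coset C a) ` ({C \<in> rcosets H. f C \<noteq> 0} \<times> A)"
      using Ca by force
  qed
  have "finite ((\<lambda>(C, a). fibre_coset C a) ` ({C \<in> rcosets H. f C \<noteq> 0} \<times> A))"
    using hecke_algebra_support_finite[OF f] finite_A by simp
  then have fin: "finite {C' \<in> rcosets L. pullback f C' \<noteq> 0}"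
    using sub by (rule finite_subset[rotated])
  have inv: "pullback f (L #> (x \<otimes> k)) = pullback f (L #> x)" if x: "x \<in> carrier G" and k: "k \<in> L" for x k
  proof -
    have "pullback f (L #> (x \<otimes> k)) = f (H #> (x \<otimes> k))"
      using pullback_r_coset L_carrier[OF k] x by simp
    also have "\<dots> = f (H #> x)" using hecke_algebra_right_invariant[OF f x] k L_subset_H by blast
    finally show ?thesis using pullback_r_coset[OF x] by simp
  qed
  have "\<And>C. C \<notin> rcosets L \<Longrightarrow> pullback f C = 0" by (simp add: pullback_def)
  then show ?thesis unfolding hecke_algebra_def using fin inv by blast
qed

lemma pullback_l2_cosets:
  assumes \<xi>: "\<xi> \<in> l2_cosets G H"
  shows "pullback \<xi> \<in> l2_cosets G L" "l2_norm G L (pullback \<xi>) = sqrt (real (card A)) * l2_norm G H \<xi>"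
proof -
  note fc = fibre_constant[of "\<lambda>C'. (cmod (pullback \<xi> C'))\<^sup>2" "\<lambda>C. (cmod (\<xi> C))\<^sup>2"]
  show "pullback \<xi> \<in> l2_cosets G L"
    using \<xi> fc(1) pullback_fibre_coset unfolding l2_cosets_def by (auto simp: pullback_def)
  show "l2_norm G L (pullback \<xi>) = sqrt (real (card A)) * l2_norm G H \<xi>"
    unfolding l2_norm_def using fc(2) pullback_fibre_coset by (simp add: real_sqrt_mult)
qed

lemma pullback_fibre_coset_quotient:
  assumes f: "f \<in> hecke_algebra G H" and C: "C \<in> rcosets H" and a: "a \<in> A"
    and D: "D \<in> rcosets H" and b: "b \<in> A"
  shows "pullback f (L #> (coset_rep (fibre_coset C a) \<otimes> inv coset_rep (fibre_coset D b)))
    = f (H #> (coset_rep C \<otimes> inv coset_rep D))"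
proof -
  have c: "coset_rep C \<in> carrier G" and d: "coset_rep D \<in> carrier G"
    using coset_rep_H_carrier[OF C] coset_rep_H_carrier[OF D] .
  obtain k1 where k1: "k1 \<in> L" "coset_rep (fibre_coset C a) = k1 \<otimes> (a \<otimes> coset_rep C)"
    using coset_rep_fibre_coset[OF C a] .
  obtain k2 where k2: "k2 \<in> L" "coset_rep (fibre_coset D b) = k2 \<otimes> (b \<otimes> coset_rep D)"
    using coset_rep_fibre_coset[OF D b] .
  have car: "k1 \<in> carrier G" "k2 \<in> carrier G" "a \<in> carrier G" "b \<in> carrier G"
    using k1 k2 a b L_carrier A_carrier by auto
  have "coset_rep (fibre_coset C a) \<otimes> inv coset_rep (fibre_coset D b)
      = (k1 \<otimes> a) \<otimes> ((coset_rep C \<otimes> inv coset_rep D) \<otimes> (inv b \<otimes> inv k2))"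
    using k1 k2 car c d by (simp add: m_assoc inv_mult_group)
  moreover have "k1 \<otimes> a \<in> H" "inv b \<otimes> inv k2 \<in> H"
    using subgroup.m_closed[OF H] subgroup.m_inv_closed[OF H] k1 k2 L_subset_H A_in_H[OF a] A_in_H[OF b]
    by blast+
  ultimately show ?thesis
    using pullback_r_coset r_coset_mult_left[OF H] hecke_algebra_right_invariant[OF f] car c d by simp
qed

lemma hecke_conv_pullback:
  assumes f: "f \<in> hecke_algebra G H" and C: "C \<in> rcosets H" and a: "a \<in> A"
  shows "hecke_conv G L (pullback f) (pullback \<xi>) (fibre_coset C a) = of_nat (card A) * hecke_conv G H f \<xi> C"
proof -
  have "hecke_conv G L (pullback f) (pullback \<xi>) (fibre_coset C a)
      = (\<Sum>\<^sub>\<infinity>D'\<in>rcosets L. pullback f (L #> (coset_rep (fibre_coset C a) \<otimes> inv coset_rep D')) * pullback \<xi> D')"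
    unfolding hecke_conv_def using fibre_coset_in_rcosets[OF C a] by simp
  also have "\<dots> = real (card A) *\<^sub>R (\<Sum>\<^sub>\<infinity>D\<in>rcosets H. f (H #> (coset_rep C \<otimes> inv coset_rep D)) * \<xi> D)"
    by (rule fibre_constant(2)) (simp add: pullback_fibre_coset_quotient[OF f C a] pullback_fibre_coset)
  also have "\<dots> = of_nat (card A) * hecke_conv G H f \<xi> C"
    unfolding hecke_conv_def using C by (simp add: scaleR_conv_of_real)
  finally show ?thesis .
qed

end

section \<open>Passing to a finite-index supergroup\<close>

locale transversal_length = coset_transversal +
  fixes l :: "'a \<Rightarrow> real"
  assumes l_nonneg: "\<And>x. x \<in> carrier G \<Longrightarrow> l x \<ge> 0"
    and l_subadditive: "\<And>x y. x \<in> carrier G \<Longrightarrow> y \<in> carrier G \<Longrightarrow> l (x \<otimes> y) \<le> l x + l y"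
    and l_zero_L: "\<And>x. x \<in> L \<Longrightarrow> l x = 0"
begin

definition transversal_bound :: real where
  "transversal_bound = (\<Sum>a\<in>A. l a)"

definition max_length :: "'a \<Rightarrow> real" where
  "max_length x = Max ((\<lambda>p. l (fst p \<otimes> x \<otimes> inv (snd p))) ` (A \<times> A))"

definition induced_length :: "'a \<Rightarrow> real" where
  "induced_length x = (if x \<in> H then 0 else max_length x)"

lemma transversal_bound_nonneg: "transversal_bound \<ge> 0"
  unfolding transversal_bound_def using l_nonneg A_carrier by (simp add: sum_nonneg)

lemma length_H_le_transversal_bound:
  assumes "h \<in> H"
  shows "l h \<le> transversal_bound"
proof -
  obtain a k where ak: "a \<in> A" "k \<in> L" "h = k \<otimes> a" using transversal_decomp[OF assms] .
  have "l h \<le> l k + l a" using ak l_subadditive L_carrier A_carrier by simp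
  moreover have "l a \<le> transversal_bound"
    unfolding transversal_bound_def using ak(1) l_nonneg A_carrier finite_A
    by (intro member_le_sum) auto
  ultimately show ?thesis using l_zero_L[OF ak(2)] by simp
qed

lemma max_length_ge: "a \<in> A \<Longrightarrow> b \<in> A \<Longrightarrow> l (a \<otimes> x \<otimes> inv b) \<le> max_length x"
  unfolding max_length_def using finite_A by (intro Max_ge) force+

lemma max_length_attained: "\<exists>a\<in>A. \<exists>b\<in>A. max_length x = l (a \<otimes> x \<otimes> inv b)"
proof -
  have "A \<noteq> {}" using card_A_pos by auto
  then have "max_length x \<in> (\<lambda>p. l (fst p \<otimes> x \<otimes> inv (snd p))) ` (A \<times> A)"
    unfolding max_length_def using finite_A by (intro Max_in) auto
  then show ?thesis by force
qed

lemma max_length_nonneg: "x \<in> carrier G \<Longrightarrow> max_length x \<ge> 0"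
  using max_length_attained[of x] l_nonneg A_carrier by fastforce

lemma length_le_max_length:
  assumes h: "h \<in> H" and h': "h' \<in> H" and x: "x \<in> carrier G"
  shows "l (h \<otimes> x \<otimes> h') \<le> max_length x"
proof -
  obtain a k where ak: "a \<in> A" "k \<in> L" "h = k \<otimes> a" using transversal_decomp[OF h] .
  obtain b k' where bk: "b \<in> A" "k' \<in> L" "inv h' = k' \<otimes> b"
    using transversal_decomp[OF subgroup.m_inv_closed[OF H h']] .
  have car: "h' \<in> carrier G" "k \<in> carrier G" "k' \<in> carrier G" "a \<in> carrier G" "b \<in> carrier G"
    using h' ak bk H_carrier L_carrier A_carrier by auto
  have "h' = inv (k' \<otimes> b)" using bk(3) car by (metis inv_inv)
  then have "h \<otimes> x \<otimes> h' = k \<otimes> (a \<otimes> x \<otimes> inv b) \<otimes> inv k'"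
    unfolding ak(3) using car x by (simp add: m_assoc inv_mult_group)
  then have "l (h \<otimes> x \<otimes> h') \<le> l (a \<otimes> x \<otimes> inv b)"
    using subadditive_mult_subgroup_le[OF L l_subadditive l_zero_L ak(2) subgroup.m_inv_closed[OF L bk(2)]]
      car x by simp
  also have "\<dots> \<le> max_length x" by (rule max_length_ge[OF ak(1) bk(1)])
  finally show ?thesis .
qed

lemma max_length_mult_H_le:
  assumes h: "h \<in> H" and h': "h' \<in> H" and x: "x \<in> carrier G"
  shows "max_length (h \<otimes> x \<otimes> h') \<le> max_length x"
proof -
  obtain a b where ab: "a \<in> A" "b \<in> A" "max_length (h \<otimes> x \<otimes> h') = l (a \<otimes> (h \<otimes> x \<otimes> h') \<otimes> inv b)"
    using max_length_attained by blast
  have "a \<otimes> (h \<otimes> x \<otimes> h') \<otimes> inv b = (a \<otimes> h) \<otimes> x \<otimes> (h' \<otimes> inv b)"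
    using ab A_carrier h h' H_carrier x by (simp add: m_assoc)
  moreover have "a \<otimes> h \<in> H" "h' \<otimes> inv b \<in> H"
    using subgroup.m_closed[OF H] subgroup.m_inv_closed[OF H] A_in_H ab h h' by auto
  ultimately show ?thesis using ab(3) length_le_max_length x by simp
qed

lemma induced_length_nonneg: "x \<in> carrier G \<Longrightarrow> induced_length x \<ge> 0"
  unfolding induced_length_def using max_length_nonneg by simp

lemma induced_length_H: "x \<in> H \<Longrightarrow> induced_length x = 0"
  unfolding induced_length_def by simp

lemma induced_length_subadditive:
  assumes x: "x \<in> carrier G" and y: "y \<in> carrier G"
  shows "induced_length (x \<otimes> y) \<le> induced_length x + induced_length y"
proof -
  have one: "\<one> \<in> H" by (rule subgroup.one_closed[OF H])
  consider "x \<otimes> y \<in> H" | "x \<otimes> y \<notin> H" "x \<in> H" | "x \<otimes> y \<notin> H" "y \<in> H"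
    | "x \<otimes> y \<notin> H" "x \<notin> H" "y \<notin> H"
    by blast
  then show ?thesis
  proof cases
    case 1
    then show ?thesis using induced_length_nonneg x y induced_length_H by (simp add: add_nonneg_nonneg)
  next
    case 2
    then have "y \<notin> H" using subgroup.m_closed[OF H] by blast
    then show ?thesis using 2 max_length_mult_H_le[OF 2(2) one y] x y unfolding induced_length_def by simp
  next
    case 3
    then have "x \<notin> H" using subgroup.m_closed[OF H] subgroup.m_inv_closed[OF H] y
      by (metis H_carrier inv_closed m_assoc r_inv r_one)
    then show ?thesis using 3 max_length_mult_H_le[OF one 3(2) x] x y unfolding induced_length_def by simp
  next
    case 4
    obtain a b where ab: "a \<in> A" "b \<in> A" "max_length (x \<otimes> y) = l (a \<otimes> (x \<otimes> y) \<otimes> inv b)"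
      using max_length_attained by blast
    have "l (a \<otimes> (x \<otimes> y) \<otimes> inv b) \<le> l (a \<otimes> x \<otimes> \<one>) + l (\<one> \<otimes> y \<otimes> inv b)"
      using l_subadditive[of "a \<otimes> x" "y \<otimes> inv b"] ab A_carrier x y by (simp add: m_assoc)
    also have "\<dots> \<le> max_length x + max_length y"
      using length_le_max_length[OF A_in_H[OF ab(1)] one x]
        length_le_max_length[OF one subgroup.m_inv_closed[OF H A_in_H[OF ab(2)]] y] by simp
    finally show ?thesis using 4 ab(3) unfolding induced_length_def by simp
  qed
qed

lemma induced_length_inv:
  assumes l_inv: "\<And>x. x \<in> carrier G \<Longrightarrow> l (inv x) = l x" and x: "x \<in> carrier G"
  shows "induced_length (inv x) = induced_length x"
proof -
  have le: "max_length (inv z) \<le> max_length z" if z: "z \<in> carrier G" for z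
  proof -
    obtain a b where ab: "a \<in> A" "b \<in> A" "max_length (inv z) = l (a \<otimes> inv z \<otimes> inv b)"
      using max_length_attained by blast
    have "a \<otimes> inv z \<otimes> inv b = inv (b \<otimes> z \<otimes> inv a)"
      using ab A_carrier z by (simp add: inv_mult_group m_assoc)
    then have "max_length (inv z) = l (b \<otimes> z \<otimes> inv a)" using ab(3) l_inv ab A_carrier z by simp
    also have "\<dots> \<le> max_length z" by (rule max_length_ge[OF ab(2) ab(1)])
    finally show ?thesis .
  qed
  have "inv x \<in> H \<longleftrightarrow> x \<in> H" using subgroup.m_inv_closed[OF H] x by (metis inv_inv)
  then show ?thesis unfolding induced_length_def using le[OF x] le[of "inv x"] x by simp
qed

lemma length_H_mult_le:
  assumes h: "h \<in> H" and x: "x \<in> carrier G"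
  shows "1 + l (h \<otimes> x) \<le> (1 + transversal_bound) * (1 + induced_length x)"
proof (cases "x \<in> H")
  case True
  then have "l (h \<otimes> x) \<le> transversal_bound"
    using length_H_le_transversal_bound subgroup.m_closed[OF H h] by blast
  then show ?thesis using True induced_length_def by simp
next
  case False
  have "l (h \<otimes> x \<otimes> \<one>) \<le> max_length x"
    by (rule length_le_max_length[OF h subgroup.one_closed[OF H] x])
  then have "l (h \<otimes> x) \<le> induced_length x" using False H_carrier[OF h] x unfolding induced_length_def by simp
  moreover have "0 \<le> transversal_bound * (1 + induced_length x)"
    using transversal_bound_nonneg induced_length_nonneg[OF x] by simp
  ultimately show ?thesis by (simp add: algebra_simps)
qed

lemma pullback_weight_le:
  assumes s: "s > 0" and C: "C \<in> rcosets H" and a: "a \<in> A"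
  shows "weighted_sq (pullback f) l s (fibre_coset C a)
    \<le> (1 + transversal_bound) powr (2 * s) * weighted_sq f induced_length s C"
proof -
  obtain k where k: "k \<in> L" "coset_rep (fibre_coset C a) = k \<otimes> (a \<otimes> coset_rep C)"
    using coset_rep_fibre_coset[OF C a] .
  have c: "coset_rep C \<in> carrier G" using coset_rep_H_carrier[OF C] .
  have "k \<otimes> a \<in> H" using subgroup.m_closed[OF H] k L_subset_H A_in_H[OF a] by blast
  moreover have "coset_rep (fibre_coset C a) = (k \<otimes> a) \<otimes> coset_rep C"
    using k L_carrier A_carrier[OF a] c by (simp add: m_assoc)
  ultimately have le: "1 + l (coset_rep (fibre_coset C a)) \<le> (1 + transversal_bound) * (1 + induced_length (coset_rep C))"
    using length_H_mult_le c by simp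
  have "0 \<le> 1 + l (coset_rep (fibre_coset C a))"
    using l_nonneg coset_rep_mem(2)[OF L fibre_coset_in_rcosets[OF C a]] by (simp add: add_nonneg_nonneg)
  then have "(1 + l (coset_rep (fibre_coset C a))) powr (2 * s)
      \<le> (1 + transversal_bound) powr (2 * s) * (1 + induced_length (coset_rep C)) powr (2 * s)"
    using powr_mono2[of "2 * s", OF _ _ le] s transversal_bound_nonneg induced_length_nonneg[OF c]
    by (simp add: powr_mult)
  then have "(cmod (f C))\<^sup>2 * (1 + l (coset_rep (fibre_coset C a))) powr (2 * s)
      \<le> (cmod (f C))\<^sup>2 * ((1 + transversal_bound) powr (2 * s) * (1 + induced_length (coset_rep C)) powr (2 * s))"
    by (rule mult_left_mono) simp
  then show ?thesis unfolding weighted_sq_def using pullback_fibre_coset[OF C a] by (simp add: ac_simps)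
qed

lemma rd_weight_pullback_le:
  assumes f: "f \<in> hecke_algebra G H" and s: "s > 0"
  shows "rd_weight G L (pullback f) l s
    \<le> real (card A) * ((1 + transversal_bound) powr (2 * s) * rd_weight G H f induced_length s)"
proof -
  define g where "g = weighted_sq (pullback f) l s"
  define k where "k C = (1 + transversal_bound) powr (2 * s) * weighted_sq f induced_length s C" for C
  have gs: "g summable_on rcosets L"
    unfolding g_def by (rule weighted_sq_summable[OF pullback_hecke_algebra[OF f]])
  have ks: "k summable_on rcosets H"
    unfolding k_def by (intro summable_on_cmult_right weighted_sq_summable[OF f])
  have "rd_weight G L (pullback f) l s = (\<Sum>a\<in>A. infsum (\<lambda>C. g (fibre_coset C a)) (rcosets H))"
    unfolding rd_weight_def g_def by (rule infsum_fibres[OF gs[unfolded g_def]])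
  also have "\<dots> \<le> (\<Sum>a\<in>A. infsum k (rcosets H))"
    using gs summable_on_fibres_iff[of g] ks pullback_weight_le[OF s]
    by (intro sum_mono infsum_mono) (auto simp only: g_def k_def)
  also have "\<dots> = real (card A) * infsum k (rcosets H)" by simp
  also have "infsum k (rcosets H) = (1 + transversal_bound) powr (2 * s) * rd_weight G H f induced_length s"
    unfolding k_def rd_weight_def by (rule infsum_cmult_right')
  finally show ?thesis .
qed

lemma l2_norm_hecke_conv_pullback:
  assumes f: "f \<in> hecke_algebra G H"
  shows "l2_norm G L (hecke_conv G L (pullback f) (pullback \<xi>))
    = real (card A) * sqrt (real (card A)) * l2_norm G H (hecke_conv G H f \<xi>)"
proof -
  define n where "n = real (card A)"
  have "(cmod (hecke_conv G L (pullback f) (pullback \<xi>) (fibre_coset C a)))\<^sup>2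
      = n\<^sup>2 * (cmod (hecke_conv G H f \<xi> C))\<^sup>2" if "C \<in> rcosets H" "a \<in> A" for C a
    using hecke_conv_pullback[OF f that] unfolding n_def by (simp add: norm_mult power_mult_distrib)
  then have "(\<Sum>\<^sub>\<infinity>C'\<in>rcosets L. (cmod (hecke_conv G L (pullback f) (pullback \<xi>) C'))\<^sup>2)
      = n *\<^sub>R (\<Sum>\<^sub>\<infinity>C\<in>rcosets H. n\<^sup>2 * (cmod (hecke_conv G H f \<xi> C))\<^sup>2)"
    unfolding n_def by (rule fibre_constant(2))
  also have "\<dots> = n * (n\<^sup>2 * (\<Sum>\<^sub>\<infinity>C\<in>rcosets H. (cmod (hecke_conv G H f \<xi> C))\<^sup>2))"
    by (simp add: infsum_cmult_right')
  finally show ?thesis unfolding l2_norm_def n_def by (simp add: real_sqrt_mult)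
qed

lemma rd_inequality_induced:
  assumes rd: "rd_inequality G L l s c" and s: "s > 0" and c: "c > 0"
  shows "rd_inequality G H induced_length s (c * (1 + transversal_bound) powr s / sqrt (real (card A)))"
  unfolding rd_inequality_def
proof (intro ballI)
  fix f \<xi> assume f: "f \<in> hecke_algebra G H" and \<xi>: "\<xi> \<in> l2_cosets G H"
  define n where "n = real (card A)"
  define P where "P = (1 + transversal_bound) powr s"
  define W where "W = rd_weight G H f induced_length s"
  have n: "n > 0" "sqrt n * sqrt n = n" unfolding n_def using card_A_pos by simp_all
  have P: "P \<ge> 0" "(1 + transversal_bound) powr (2 * s) = P * P"
    unfolding P_def by (simp_all add: powr_add[symmetric])
  have W: "W \<ge> 0" unfolding W_def by (rule rd_weight_nonneg, rule induced_length_nonneg)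
  have "sqrt (rd_weight G L (pullback f) l s) \<le> sqrt (n * (P * P * W))"
    using rd_weight_pullback_le[OF f s] P unfolding n_def W_def by (simp add: real_sqrt_le_mono)
  also have "\<dots> = sqrt n * P * sqrt W" using P n W by (simp add: real_sqrt_mult)
  finally have weight: "sqrt (rd_weight G L (pullback f) l s) \<le> sqrt n * P * sqrt W" .
  have "n * sqrt n * l2_norm G H (hecke_conv G H f \<xi>)
      = l2_norm G L (hecke_conv G L (pullback f) (pullback \<xi>))"
    using l2_norm_hecke_conv_pullback[OF f] unfolding n_def by simp
  also have "\<dots> \<le> c * sqrt (rd_weight G L (pullback f) l s) * l2_norm G L (pullback \<xi>)"
    using rd pullback_hecke_algebra[OF f] pullback_l2_cosets(1)[OF \<xi>] unfolding rd_inequality_def by blast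
  also have "\<dots> \<le> c * (sqrt n * P * sqrt W) * (sqrt n * l2_norm G H \<xi>)"
    unfolding pullback_l2_cosets(2)[OF \<xi>] n_def[symmetric] using weight c n l2_norm_nonneg[of G H \<xi>]
    by (intro mult_right_mono mult_left_mono) auto
  also have "\<dots> = (sqrt n * sqrt n) * (c * P * sqrt W * l2_norm G H \<xi>)"
    by (simp add: ac_simps)
  finally have "n * (sqrt n * l2_norm G H (hecke_conv G H f \<xi>)) \<le> n * (c * P * sqrt W * l2_norm G H \<xi>)"
    using n(2) by (simp add: mult.assoc)
  then have "sqrt n * l2_norm G H (hecke_conv G H f \<xi>) \<le> c * P * sqrt W * l2_norm G H \<xi>"
    using n(1) by simp
  then have "l2_norm G H (hecke_conv G H f \<xi>) \<le> c * P * sqrt W * l2_norm G H \<xi> / sqrt n"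
    using n(1) by (simp add: pos_le_divide_eq mult.commute)
  then show "l2_norm G H (hecke_conv G H f \<xi>) \<le> c * (1 + transversal_bound) powr s / sqrt (real (card A))
      * sqrt (rd_weight G H f induced_length s) * l2_norm G H \<xi>"
    unfolding P_def W_def n_def by (simp add: mult.commute mult.left_commute)
qed

lemma induced_length_length_function:
  assumes tg: "topological_group G T" and open_H: "openin T H"
    and l_borel: "l \<in> borel_measurable (borel_of T)"
    and l_inv: "\<And>x. x \<in> carrier G \<Longrightarrow> l (inv x) = l x"
  shows "length_function G T H induced_length"
proof -
  have "(\<lambda>x. l (fst p \<otimes> x \<otimes> inv (snd p))) \<in> borel_measurable (borel_of T)" if p: "p \<in> A \<times> A" for p
  proof -
    have "continuous_map T T (\<lambda>x. fst p \<otimes> x \<otimes> inv (snd p))"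
      using topological_group_translation_continuous[OF tg] A_carrier p by auto
    from measurable_comp[OF continuous_map_measurable_borel_of[OF this] l_borel] show ?thesis
      by (simp add: o_def)
  qed
  then have "max_length \<in> borel_measurable (borel_of T)"
    unfolding max_length_def[abs_def]
    by (intro borel_measurable_Max[of "A \<times> A" "\<lambda>p x. l (fst p \<otimes> x \<otimes> inv (snd p))", simplified])
      (use finite_A in auto)
  moreover have "H \<inter> space (borel_of T) \<in> sets (borel_of T)"
    using openin_in_borel_of[OF open_H] space_borel_of[of T] openin_subset[OF open_H]
    by (simp add: Int_absorb2)
  ultimately have "induced_length \<in> borel_measurable (borel_of T)"
    unfolding induced_length_def[abs_def] by (intro measurable_If_set) simp_all
  then show ?thesis unfolding length_function_def
    using induced_length_nonneg induced_length_H[OF subgroup.one_closed[OF H]]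
      induced_length_inv[OF l_inv] induced_length_subadditive induced_length_H by auto
qed

end

section \<open>Passing to a finite-index subgroup\<close>

locale hecke_transversal_length = coset_transversal +
  fixes l :: "'a \<Rightarrow> real"
  assumes l_nonneg: "\<And>x. x \<in> carrier G \<Longrightarrow> l x \<ge> 0"
    and l_subadditive: "\<And>x y. x \<in> carrier G \<Longrightarrow> y \<in> carrier G \<Longrightarrow> l (x \<otimes> y) \<le> l x + l y"
    and l_zero_H: "\<And>x. x \<in> H \<Longrightarrow> l x = 0"
    and H_hecke: "hecke_subgroup G H"
begin

definition fibre_abs_sum :: "('a set \<Rightarrow> complex) \<Rightarrow> 'a \<Rightarrow> real" where
  "fibre_abs_sum f x = (\<Sum>a\<in>A. \<Sum>b\<in>A. cmod (f (L #> (a \<otimes> x \<otimes> inv b))))"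

definition pushforward :: "('a set \<Rightarrow> complex) \<Rightarrow> 'a set \<Rightarrow> complex" where
  "pushforward f C = (if C \<in> rcosets H then complex_of_real (fibre_abs_sum f (coset_rep C)) else 0)"

lemma fibre_abs_sum_nonneg: "fibre_abs_sum f x \<ge> 0"
  unfolding fibre_abs_sum_def by (simp add: sum_nonneg)

lemma row_le_fibre_abs_sum: "a \<in> A \<Longrightarrow> (\<Sum>b\<in>A. cmod (f (L #> (a \<otimes> y \<otimes> inv b)))) \<le> fibre_abs_sum f y"
  unfolding fibre_abs_sum_def using finite_A by (intro member_le_sum) (auto simp: sum_nonneg)

lemma abs_le_fibre_abs_sum:
  assumes "a \<in> A" "b \<in> A"
  shows "cmod (f (L #> (a \<otimes> y \<otimes> inv b))) \<le> fibre_abs_sum f y"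
proof -
  have "cmod (f (L #> (a \<otimes> y \<otimes> inv b))) \<le> (\<Sum>b\<in>A. cmod (f (L #> (a \<otimes> y \<otimes> inv b))))"
    using assms(2) finite_A by (intro member_le_sum) auto
  then show ?thesis using row_le_fibre_abs_sum[OF assms(1), of f y] by linarith
qed

text \<open>Multiplying x by elements of H on either side only permutes the cosets L a x b\<inverse>.\<close>

lemma fibre_abs_sum_mult_H:
  assumes f: "f \<in> hecke_algebra G L" and h: "h \<in> H" and h': "h' \<in> H" and x: "x \<in> carrier G"
  shows "fibre_abs_sum f (h \<otimes> x \<otimes> h') = fibre_abs_sum f x"
proof -
  have hc: "h \<in> carrier G" and h'c: "h' \<in> carrier G" using h h' H_carrier by auto
  define \<Phi> where "\<Phi> y = cmod (f (L #> y))" for y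
  have \<Phi>: "\<Phi> (y \<otimes> k) = \<Phi> y" if "k \<in> L" "y \<in> carrier G" for k y
    unfolding \<Phi>_def using hecke_algebra_right_invariant[OF f] that by simp
  define \<Psi> where "\<Psi> y = (\<Sum>b\<in>A. \<Phi> (y \<otimes> inv b))" for y
  have \<Psi>: "\<Psi> (k \<otimes> y) = \<Psi> y" if k: "k \<in> L" and y: "y \<in> carrier G" for k y
    unfolding \<Psi>_def \<Phi>_def using r_coset_mult_left[OF L k] L_carrier[OF k] y A_carrier
    by (intro sum.cong refl) (simp add: m_assoc)
  have "fibre_abs_sum f (h \<otimes> x \<otimes> h') = (\<Sum>a\<in>A. \<Sum>b\<in>A. \<Phi> ((a \<otimes> h \<otimes> x) \<otimes> h' \<otimes> inv b))"
    unfolding fibre_abs_sum_def \<Phi>_def using A_carrier hc h'c x by (intro sum.cong refl) (simp add: m_assoc)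
  also have "\<dots> = (\<Sum>a\<in>A. \<Psi> (a \<otimes> h \<otimes> x))"
    unfolding \<Psi>_def by (rule sum.cong[OF refl]) (simp add: sum_transversal_inv_mult_right[OF h' _ \<Phi>] A_carrier hc x)
  also have "\<dots> = (\<Sum>a\<in>A. \<Psi> (a \<otimes> x))" by (rule sum_transversal_mult_left[OF h x \<Psi>])
  also have "\<dots> = fibre_abs_sum f x" unfolding fibre_abs_sum_def \<Psi>_def \<Phi>_def by simp
  finally show ?thesis .
qed

lemma pushforward_r_coset:
  assumes f: "f \<in> hecke_algebra G L" and y: "y \<in> carrier G"
  shows "pushforward f (H #> y) = complex_of_real (fibre_abs_sum f y)"
proof -
  obtain h where h: "h \<in> H" "coset_rep (H #> y) = h \<otimes> y" using coset_rep_r_coset[OF H y] .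
  have "fibre_abs_sum f (h \<otimes> y \<otimes> \<one>) = fibre_abs_sum f y"
    by (rule fibre_abs_sum_mult_H[OF f h(1) subgroup.one_closed[OF H] y])
  then show ?thesis unfolding pushforward_def using subgroup_rcosetsI[OF H y] h H_carrier y by simp
qed

lemma pushforward_hecke_algebra:
  assumes f: "f \<in> hecke_algebra G L"
  shows "pushforward f \<in> hecke_algebra G H"
proof -
  have sub: "{C \<in> rcosets H. pushforward f C \<noteq> 0} \<subseteq>
      (\<lambda>(S, b). H #> (coset_rep S \<otimes> b)) ` ({S \<in> rcosets L. f S \<noteq> 0} \<times> A)"
  proof
    fix C assume "C \<in> {C \<in> rcosets H. pushforward f C \<noteq> 0}"
    then have C: "C \<in> rcosets H" and nz: "fibre_abs_sum f (coset_rep C) \<noteq> 0"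
      unfolding pushforward_def by auto
    have c: "coset_rep C \<in> carrier G" using coset_rep_H_carrier[OF C] .
    obtain a b where ab: "a \<in> A" "b \<in> A" "f (L #> (a \<otimes> coset_rep C \<otimes> inv b)) \<noteq> 0"
      using nz unfolding fibre_abs_sum_def by (metis (no_types, lifting) norm_zero sum.neutral)
    define S where "S = L #> (a \<otimes> coset_rep C \<otimes> inv b)"
    have car: "a \<in> carrier G" "b \<in> carrier G" using ab A_carrier by auto
    have S: "S \<in> rcosets L" unfolding S_def using subgroup_rcosetsI[OF L] car c by simp
    obtain k where k: "k \<in> L" "coset_rep S = k \<otimes> (a \<otimes> coset_rep C \<otimes> inv b)"
      unfolding S_def using coset_rep_r_coset[OF L, of "a \<otimes> coset_rep C \<otimes> inv b"] car c by auto
    have "coset_rep S \<otimes> b = (k \<otimes> a) \<otimes> coset_rep C"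
      using k L_carrier[OF k(1)] car c by (simp add: m_assoc)
    moreover have "k \<otimes> a \<in> H" using subgroup.m_closed[OF H] k(1) L_subset_H A_in_H[OF ab(1)] by blast
    ultimately have "H #> (coset_rep S \<otimes> b) = C"
      using r_coset_mult_left[OF H, of "k \<otimes> a" "coset_rep C"] c coset_rep_mem(3)[OF H C] by simp
    then show "C \<in> (\<lambda>(S, b). H #> (coset_rep S \<otimes> b)) ` ({S \<in> rcosets L. f S \<noteq> 0} \<times> A)"
      using S ab unfolding S_def by force
  qed
  have "finite ((\<lambda>(S, b). H #> (coset_rep S \<otimes> b)) ` ({S \<in> rcosets L. f S \<noteq> 0} \<times> A))"
    using hecke_algebra_support_finite[OF f] finite_A by simp
  then have fin: "finite {C \<in> rcosets H. pushforward f C \<noteq> 0}"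
    using sub by (rule finite_subset[rotated])
  have inv: "pushforward f (H #> (x \<otimes> h)) = pushforward f (H #> x)" if x: "x \<in> carrier G" and h: "h \<in> H" for x h
    using fibre_abs_sum_mult_H[OF f subgroup.one_closed[OF H] h x] pushforward_r_coset[OF f] x H_carrier[OF h]
    by simp
  have "\<And>C. C \<notin> rcosets H \<Longrightarrow> pushforward f C = 0" by (simp add: pushforward_def)
  then show ?thesis unfolding hecke_algebra_def using fin inv by blast
qed

lemma fibre_abs_sum_row_finite:
  assumes f: "f \<in> hecke_algebra G L" and c: "c \<in> carrier G"
  shows "finite {D \<in> rcosets H. fibre_abs_sum f (c \<otimes> inv (coset_rep D)) \<noteq> 0}"
proof -
  have "pushforward f (H #> (c \<otimes> inv coset_rep D)) = complex_of_real (fibre_abs_sum f (c \<otimes> inv coset_rep D))"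
    if "D \<in> rcosets H" for D
    using pushforward_r_coset[OF f] c coset_rep_H_carrier[OF that] by simp
  then have "{D \<in> rcosets H. fibre_abs_sum f (c \<otimes> inv (coset_rep D)) \<noteq> 0}
      = {D \<in> rcosets H. pushforward f (H #> (c \<otimes> inv coset_rep D)) \<noteq> 0}"
    by auto
  then show ?thesis using hecke_algebra_row_finite[OF H_hecke pushforward_hecke_algebra[OF f] c] by simp
qed

definition fibre_norm :: "('a set \<Rightarrow> complex) \<Rightarrow> 'a set \<Rightarrow> real" where
  "fibre_norm \<xi> D = sqrt (\<Sum>a\<in>A. (cmod (\<xi> (fibre_coset D a)))\<^sup>2)"

definition fibre_l2 :: "('a set \<Rightarrow> complex) \<Rightarrow> 'a set \<Rightarrow> complex" where
  "fibre_l2 \<xi> D = (if D \<in> rcosets H then complex_of_real (fibre_norm \<xi> D) else 0)"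

definition majorant :: "('a set \<Rightarrow> complex) \<Rightarrow> ('a set \<Rightarrow> complex) \<Rightarrow> 'a set \<Rightarrow> real" where
  "majorant f \<xi> C = (\<Sum>\<^sub>\<infinity>D\<in>rcosets H. fibre_abs_sum f (coset_rep C \<otimes> inv (coset_rep D)) * fibre_norm \<xi> D)"

lemma fibre_norm_nonneg: "fibre_norm \<xi> D \<ge> 0"
  unfolding fibre_norm_def by (simp add: sum_nonneg)

lemma abs_le_fibre_norm:
  assumes "b \<in> A"
  shows "cmod (\<xi> (fibre_coset D b)) \<le> fibre_norm \<xi> D"
proof -
  have "(cmod (\<xi> (fibre_coset D b)))\<^sup>2 \<le> (\<Sum>a\<in>A. (cmod (\<xi> (fibre_coset D a)))\<^sup>2)"
    using assms finite_A by (intro member_le_sum) auto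
  then have "sqrt ((cmod (\<xi> (fibre_coset D b)))\<^sup>2) \<le> fibre_norm \<xi> D"
    unfolding fibre_norm_def by (rule real_sqrt_le_mono)
  then show ?thesis by simp
qed

lemma majorant_nonneg: "majorant f \<xi> C \<ge> 0"
  unfolding majorant_def by (intro infsum_nonneg mult_nonneg_nonneg fibre_abs_sum_nonneg fibre_norm_nonneg)

lemma fibre_l2_l2_cosets:
  assumes \<xi>: "\<xi> \<in> l2_cosets G L"
  shows "fibre_l2 \<xi> \<in> l2_cosets G H" "l2_norm G H (fibre_l2 \<xi>) = l2_norm G L \<xi>"
proof -
  have sq: "(cmod (fibre_l2 \<xi> D))\<^sup>2 = (\<Sum>a\<in>A. (cmod (\<xi> (fibre_coset D a)))\<^sup>2)" if "D \<in> rcosets H" for D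
    using that unfolding fibre_l2_def fibre_norm_def by (simp add: sum_nonneg)
  have summ: "\<And>a. a \<in> A \<Longrightarrow> (\<lambda>D. (cmod (\<xi> (fibre_coset D a)))\<^sup>2) summable_on rcosets H"
    using summable_on_fibres_iff[of "\<lambda>C'. (cmod (\<xi> C'))\<^sup>2"] l2_cosets_summable[OF \<xi>] by blast
  have "(\<lambda>D. (cmod (fibre_l2 \<xi> D))\<^sup>2) summable_on rcosets H"
    by (subst summable_on_cong[OF sq]) (simp_all add: summable_on_finite_sum[OF finite_A summ])
  moreover have "\<And>D. D \<notin> rcosets H \<Longrightarrow> fibre_l2 \<xi> D = 0" by (simp add: fibre_l2_def)
  ultimately show "fibre_l2 \<xi> \<in> l2_cosets G H" unfolding l2_cosets_def by blast
  have "infsum (\<lambda>D. (cmod (fibre_l2 \<xi> D))\<^sup>2) (rcosets H)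
      = infsum (\<lambda>D. \<Sum>a\<in>A. (cmod (\<xi> (fibre_coset D a)))\<^sup>2) (rcosets H)"
    using sq by (rule infsum_cong)
  also have "\<dots> = (\<Sum>a\<in>A. infsum (\<lambda>D. (cmod (\<xi> (fibre_coset D a)))\<^sup>2) (rcosets H))"
    by (rule infsum_finite_sum[OF finite_A summ])
  also have "\<dots> = infsum (\<lambda>C'. (cmod (\<xi> C'))\<^sup>2) (rcosets L)"
    by (rule infsum_fibres[OF l2_cosets_summable[OF \<xi>], symmetric])
  finally show "l2_norm G H (fibre_l2 \<xi>) = l2_norm G L \<xi>" unfolding l2_norm_def by simp
qed

lemma hecke_conv_pushforward:
  assumes f: "f \<in> hecke_algebra G L" and C: "C \<in> rcosets H"
  shows "hecke_conv G H (pushforward f) (fibre_l2 \<xi>) C = complex_of_real (majorant f \<xi> C)"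
proof -
  have summand: "pushforward f (H #> (coset_rep C \<otimes> inv coset_rep D)) * fibre_l2 \<xi> D
      = complex_of_real (fibre_abs_sum f (coset_rep C \<otimes> inv coset_rep D) * fibre_norm \<xi> D)"
    if D: "D \<in> rcosets H" for D
  proof -
    have "coset_rep C \<otimes> inv coset_rep D \<in> carrier G"
      using coset_rep_H_carrier[OF C] coset_rep_H_carrier[OF D] by simp
    then show ?thesis using pushforward_r_coset[OF f] D unfolding fibre_l2_def by simp
  qed
  have "hecke_conv G H (pushforward f) (fibre_l2 \<xi>) C
      = (\<Sum>\<^sub>\<infinity>D\<in>rcosets H. pushforward f (H #> (coset_rep C \<otimes> inv coset_rep D)) * fibre_l2 \<xi> D)"
    unfolding hecke_conv_def using C by simp
  also have "\<dots> = (\<Sum>\<^sub>\<infinity>D\<in>rcosets H.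
      complex_of_real (fibre_abs_sum f (coset_rep C \<otimes> inv coset_rep D) * fibre_norm \<xi> D))"
    by (rule infsum_cong) (rule summand)
  also have "\<dots> = complex_of_real (majorant f \<xi> C)"
    unfolding majorant_def by (rule infsum_complex_of_real)
  finally show ?thesis .
qed

lemma hecke_conv_row_shift:
  assumes f: "f \<in> hecke_algebra G L" and x: "x \<in> carrier G"
  obtains a0 where "a0 \<in> A"
    "\<And>D b. D \<in> rcosets H \<Longrightarrow> b \<in> A \<Longrightarrow> f (L #> (x \<otimes> inv coset_rep (fibre_coset D b)))
        = f (L #> (a0 \<otimes> (coset_rep (H #> x) \<otimes> inv coset_rep D) \<otimes> inv b))"
proof -
  define c where "c = coset_rep (H #> x)"
  have cc: "c \<in> carrier G" unfolding c_def using coset_rep_mem(2)[OF H subgroup_rcosetsI[OF H x]] .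
  obtain h where h: "h \<in> H" "c = h \<otimes> x" unfolding c_def using coset_rep_r_coset[OF H x] .
  obtain a0 k0 where ak: "a0 \<in> A" "k0 \<in> L" "inv h = k0 \<otimes> a0"
    using transversal_decomp[OF subgroup.m_inv_closed[OF H h(1)]] .
  have car: "h \<in> carrier G" "k0 \<in> carrier G" "a0 \<in> carrier G"
    using h(1) ak H_carrier L_carrier A_carrier by auto
  have "inv h \<otimes> c = x" using h car x by (simp add: m_assoc[symmetric])
  then have x_eq: "x = k0 \<otimes> a0 \<otimes> c" using ak(3) by simp
  have "f (L #> (x \<otimes> inv coset_rep (fibre_coset D b))) = f (L #> (a0 \<otimes> (c \<otimes> inv coset_rep D) \<otimes> inv b))"
    if D: "D \<in> rcosets H" and b: "b \<in> A" for D b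
  proof -
    have dc: "coset_rep D \<in> carrier G" and bc: "b \<in> carrier G"
      using coset_rep_H_carrier[OF D] A_carrier[OF b] .
    obtain k where k: "k \<in> L" "coset_rep (fibre_coset D b) = k \<otimes> (b \<otimes> coset_rep D)"
      using coset_rep_fibre_coset[OF D b] .
    define z where "z = a0 \<otimes> (c \<otimes> inv coset_rep D) \<otimes> inv b"
    have zc: "z \<in> carrier G" unfolding z_def using car cc dc bc by simp
    have "x \<otimes> inv coset_rep (fibre_coset D b) = (k0 \<otimes> z) \<otimes> inv k"
      unfolding z_def x_eq k(2) using car cc dc bc L_carrier[OF k(1)] by (simp add: m_assoc inv_mult_group)
    then have "f (L #> (x \<otimes> inv coset_rep (fibre_coset D b))) = f (L #> (k0 \<otimes> z))"
      using hecke_algebra_right_invariant[OF f] car zc subgroup.m_inv_closed[OF L k(1)] by simp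
    also have "\<dots> = f (L #> z)" using r_coset_mult_left[OF L ak(2) zc] by simp
    finally show ?thesis unfolding z_def .
  qed
  then show ?thesis using that ak(1) unfolding c_def by blast
qed

lemma row_summable:
  assumes f: "f \<in> hecke_algebra G L" and a0: "a0 \<in> A" and b: "b \<in> A" and c: "c \<in> carrier G"
  shows "(\<lambda>D. cmod (f (L #> (a0 \<otimes> (c \<otimes> inv (coset_rep D)) \<otimes> inv b))) * fibre_norm \<xi> D)
    summable_on rcosets H"
proof (rule summable_on_finite_support[OF fibre_abs_sum_row_finite[OF f c]], safe)
  fix D assume "D \<in> rcosets H" "cmod (f (L #> (a0 \<otimes> (c \<otimes> inv (coset_rep D)) \<otimes> inv b))) * fibre_norm \<xi> D \<noteq> 0"
  then show "fibre_abs_sum f (c \<otimes> inv (coset_rep D)) = 0 \<Longrightarrow> False"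
    using abs_le_fibre_abs_sum[OF a0 b, of f "c \<otimes> inv (coset_rep D)"] by simp
qed

lemma infsum_row_le_majorant:
  assumes f: "f \<in> hecke_algebra G L" and a0: "a0 \<in> A" and c: "c \<in> carrier G"
  shows "(\<Sum>\<^sub>\<infinity>D\<in>rcosets H. \<Sum>b\<in>A. cmod (f (L #> (a0 \<otimes> (c \<otimes> inv (coset_rep D)) \<otimes> inv b))) * fibre_norm \<xi> D)
    \<le> (\<Sum>\<^sub>\<infinity>D\<in>rcosets H. fibre_abs_sum f (c \<otimes> inv (coset_rep D)) * fibre_norm \<xi> D)"
proof (rule infsum_mono)
  show "(\<lambda>D. \<Sum>b\<in>A. cmod (f (L #> (a0 \<otimes> (c \<otimes> inv (coset_rep D)) \<otimes> inv b))) * fibre_norm \<xi> D)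
      summable_on rcosets H"
    by (rule summable_on_finite_sum[OF finite_A row_summable[OF f a0 _ c]])
  show "(\<lambda>D. fibre_abs_sum f (c \<otimes> inv (coset_rep D)) * fibre_norm \<xi> D) summable_on rcosets H"
    by (rule summable_on_finite_support[OF fibre_abs_sum_row_finite[OF f c]]) auto
  fix D
  show "(\<Sum>b\<in>A. cmod (f (L #> (a0 \<otimes> (c \<otimes> inv (coset_rep D)) \<otimes> inv b))) * fibre_norm \<xi> D)
      \<le> fibre_abs_sum f (c \<otimes> inv (coset_rep D)) * fibre_norm \<xi> D"
    unfolding sum_distrib_right[symmetric]
    by (rule mult_right_mono[OF row_le_fibre_abs_sum[OF a0] fibre_norm_nonneg])
qed

lemma hecke_conv_le_majorant:
  assumes f: "f \<in> hecke_algebra G L" and C': "C' \<in> rcosets L"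
  shows "cmod (hecke_conv G L f \<xi> C') \<le> majorant f \<xi> (H #> coset_rep C')"
proof -
  define x where "x = coset_rep C'"
  have x: "x \<in> carrier G" unfolding x_def using coset_rep_mem(2)[OF L C'] .
  define C where "C = H #> x"
  have C: "C \<in> rcosets H" unfolding C_def by (rule subgroup_rcosetsI[OF H x])
  define c where "c = coset_rep C"
  have cc: "c \<in> carrier G" unfolding c_def by (rule coset_rep_H_carrier[OF C])
  obtain a0 where a0: "a0 \<in> A" and row: "\<And>D b. D \<in> rcosets H \<Longrightarrow> b \<in> A \<Longrightarrow>
      f (L #> (x \<otimes> inv coset_rep (fibre_coset D b))) = f (L #> (a0 \<otimes> (c \<otimes> inv coset_rep D) \<otimes> inv b))"
    using hecke_conv_row_shift[OF f x] unfolding c_def C_def by blast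
  define g where "g D' = f (L #> (x \<otimes> inv (coset_rep D'))) * \<xi> D'" for D'
  define p where "p = (\<lambda>b D. cmod (f (L #> (a0 \<otimes> (c \<otimes> inv (coset_rep D)) \<otimes> inv b))) * fibre_norm \<xi> D)"
  have g_le: "cmod (g (fibre_coset D b)) \<le> p b D" if "D \<in> rcosets H" "b \<in> A" for D b
    unfolding g_def p_def norm_mult row[OF that] by (rule mult_left_mono[OF abs_le_fibre_norm[OF that(2)]]) simp
  have p_summable: "p b summable_on rcosets H" if "b \<in> A" for b
    unfolding p_def using row_summable[OF f a0 that cc] .
  have g_summable: "(\<lambda>D. cmod (g (fibre_coset D b))) summable_on rcosets H" if b: "b \<in> A" for b
    by (rule summable_on_comparison_test[OF p_summable[OF b]]) (use g_le b in auto)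
  have "cmod (hecke_conv G L f \<xi> C') = cmod (infsum g (rcosets L))"
    unfolding hecke_conv_def g_def x_def using C' by simp
  also have "\<dots> \<le> infsum (\<lambda>D'. cmod (g D')) (rcosets L)" by (rule cmod_infsum_le)
  also have "\<dots> \<le> (\<Sum>b\<in>A. infsum (\<lambda>D. cmod (g (fibre_coset D b))) (rcosets H))"
  proof (cases "(\<lambda>D'. cmod (g D')) summable_on rcosets L")
    case True
    then show ?thesis using infsum_fibres[OF True] by simp
  qed (simp add: infsum_not_exists sum_nonneg infsum_nonneg)
  also have "\<dots> \<le> (\<Sum>b\<in>A. infsum (p b) (rcosets H))"
    by (intro sum_mono infsum_mono g_summable p_summable) (auto intro: g_le)
  also have "\<dots> = infsum (\<lambda>D. \<Sum>b\<in>A. p b D) (rcosets H)"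
    by (rule infsum_finite_sum[symmetric, OF finite_A p_summable])
  also have "\<dots> \<le> majorant f \<xi> C"
    unfolding majorant_def c_def[symmetric] p_def by (rule infsum_row_le_majorant[OF f a0 cc])
  finally show ?thesis unfolding C_def x_def .
qed

lemma length_coset_rep_L: "z \<in> carrier G \<Longrightarrow> l (coset_rep (L #> z)) = l z"
  using coset_rep_r_coset[OF L] subadditive_mult_subgroup_eq[OF H l_subadditive l_zero_H, of _ \<one> z]
    subgroup.one_closed[OF H] L_subset_H
  by (metis L_carrier r_one m_closed subsetD)

lemma pushforward_weight_le:
  assumes f: "f \<in> hecke_algebra G L" and C: "C \<in> rcosets H"
  shows "weighted_sq (pushforward f) l s C
    \<le> (real (card A))\<^sup>2 * (\<Sum>b\<in>A. \<Sum>a\<in>A. weighted_sq f l s (fibre_coset C a #> inv b))"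
proof -
  define n where "n = real (card A)"
  define c where "c = coset_rep C"
  have cc: "c \<in> carrier G" unfolding c_def by (rule coset_rep_H_carrier[OF C])
  define \<phi> where "\<phi> p = cmod (f (L #> (fst p \<otimes> c \<otimes> inv (snd p))))" for p
  have abs_sum: "fibre_abs_sum f c = (\<Sum>p\<in>A \<times> A. \<phi> p)"
    unfolding fibre_abs_sum_def \<phi>_def by (simp add: sum.cartesian_product split_def)
  have cauchy_schwarz: "(fibre_abs_sum f c)\<^sup>2 \<le> n\<^sup>2 * (\<Sum>p\<in>A \<times> A. (\<phi> p)\<^sup>2)"
    using sum_squared_le_sum_of_squares[of \<phi> "A \<times> A"] unfolding abs_sum n_def
    by (simp add: card_cartesian_product power2_eq_square algebra_simps)
  have shifted: "weighted_sq f l s (fibre_coset C (fst p) #> inv (snd p)) = (\<phi> p)\<^sup>2 * (1 + l c) powr (2 * s)"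
    if p: "p \<in> A \<times> A" for p
  proof -
    have ab: "fst p \<in> A" "snd p \<in> A" using p by auto
    have "fibre_coset C (fst p) #> inv (snd p) = L #> (fst p \<otimes> c \<otimes> inv (snd p))"
      unfolding fibre_coset_def c_def[symmetric] using r_coset_assoc[OF L] A_carrier ab cc by simp
    moreover have "l (coset_rep (L #> (fst p \<otimes> c \<otimes> inv (snd p)))) = l c"
      using length_coset_rep_L A_carrier ab cc
        subadditive_mult_subgroup_eq[OF H l_subadditive l_zero_H A_in_H[OF ab(1)]
          subgroup.m_inv_closed[OF H A_in_H[OF ab(2)]] cc]
      by simp
    ultimately show ?thesis unfolding weighted_sq_def \<phi>_def by simp
  qed
  have "weighted_sq (pushforward f) l s C = (fibre_abs_sum f c)\<^sup>2 * (1 + l c) powr (2 * s)"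
    unfolding weighted_sq_def pushforward_def c_def using C fibre_abs_sum_nonneg by simp
  also have "\<dots> \<le> n\<^sup>2 * (\<Sum>p\<in>A \<times> A. (\<phi> p)\<^sup>2) * (1 + l c) powr (2 * s)"
    by (rule mult_right_mono[OF cauchy_schwarz]) simp
  also have "\<dots> = n\<^sup>2 * (\<Sum>p\<in>A \<times> A. weighted_sq f l s (fibre_coset C (fst p) #> inv (snd p)))"
    by (simp add: shifted sum_distrib_right mult.assoc)
  also have "\<dots> = n\<^sup>2 * (\<Sum>b\<in>A. \<Sum>a\<in>A. weighted_sq f l s (fibre_coset C a #> inv b))"
    by (subst sum.swap) (simp add: sum.cartesian_product split_def)
  finally show ?thesis unfolding n_def .
qed

lemma rd_weight_pushforward_le:
  assumes f: "f \<in> hecke_algebra G L"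
  shows "rd_weight G H (pushforward f) l s \<le> real (card A) ^ 3 * rd_weight G L f l s"
proof -
  define n where "n = real (card A)"
  define w where "w = weighted_sq f l s"
  have ws: "w summable_on rcosets L" unfolding w_def by (rule weighted_sq_summable[OF f])
  have shift_summable: "(\<lambda>C'. w (C' #> inv b)) summable_on rcosets L"
    and shift_infsum: "infsum (\<lambda>C'. w (C' #> inv b)) (rcosets L) = infsum w (rcosets L)" if b: "b \<in> A" for b
    using summable_on_reindex_bij_betw[OF bij_betw_r_coset_mult[OF L], of "inv b" w]
      infsum_reindex_bij_betw[OF bij_betw_r_coset_mult[OF L], of "inv b" w] ws A_carrier[OF b]
    by simp_all
  have fibre_summable: "(\<lambda>C. w (fibre_coset C a #> inv b)) summable_on rcosets H" if "a \<in> A" "b \<in> A" for a b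
    using summable_on_fibres_iff[of "\<lambda>C'. w (C' #> inv b)"] shift_summable that by blast
  define R where "R C = n\<^sup>2 * (\<Sum>b\<in>A. \<Sum>a\<in>A. w (fibre_coset C a #> inv b))" for C
  have "rd_weight G H (pushforward f) l s \<le> infsum R (rcosets H)"
    unfolding rd_weight_def R_def n_def w_def
    using weighted_sq_summable[OF pushforward_hecke_algebra[OF f]] fibre_summable pushforward_weight_le[OF f]
    by (intro infsum_mono summable_on_cmult_right summable_on_finite_sum[OF finite_A]) (auto simp: w_def)
  also have "\<dots> = n\<^sup>2 * (\<Sum>b\<in>A. \<Sum>a\<in>A. infsum (\<lambda>C. w (fibre_coset C a #> inv b)) (rcosets H))"
    unfolding R_def infsum_cmult_right'
    by (simp add: infsum_finite_sum[OF finite_A] summable_on_finite_sum[OF finite_A] fibre_summable)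
  also have "\<dots> = n\<^sup>2 * (\<Sum>b\<in>A. infsum w (rcosets L))"
    by (simp add: infsum_fibres[OF shift_summable, symmetric] shift_infsum)
  also have "\<dots> = real (card A) ^ 3 * rd_weight G L f l s"
    unfolding n_def rd_weight_def w_def by (simp add: power2_eq_square power3_eq_cube)
  finally show ?thesis .
qed

lemma majorant_sq_summable:
  assumes rd: "rd_inequality G H l s c" and f: "f \<in> hecke_algebra G L" and \<xi>: "\<xi> \<in> l2_cosets G L"
  shows "(\<lambda>C. (majorant f \<xi> C)\<^sup>2) summable_on rcosets H"
proof -
  have "(\<lambda>C. (cmod (hecke_conv G H (pushforward f) (fibre_l2 \<xi>) C))\<^sup>2) summable_on rcosets H"
    by (rule rd_inequality_conv_summable[OF H_hecke rd pushforward_hecke_algebra[OF f] fibre_l2_l2_cosets(1)[OF \<xi>]])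
  then show ?thesis
    by (rule summable_on_cong[THEN iffD1, rotated]) (simp add: hecke_conv_pushforward[OF f] majorant_nonneg)
qed

lemma sq_l2_norm_hecke_conv_le:
  assumes rd: "rd_inequality G H l s c" and f: "f \<in> hecke_algebra G L" and \<xi>: "\<xi> \<in> l2_cosets G L"
  shows "(l2_norm G L (hecke_conv G L f \<xi>))\<^sup>2
    \<le> real (card A) * (l2_norm G H (hecke_conv G H (pushforward f) (fibre_l2 \<xi>)))\<^sup>2"
proof -
  define k where "k C' = (majorant f \<xi> (H #> coset_rep C'))\<^sup>2" for C'
  have k_fibre: "k (fibre_coset C a) = (majorant f \<xi> C)\<^sup>2" if "C \<in> rcosets H" "a \<in> A" for C a
    unfolding k_def using H_r_coset_fibre_coset[OF that] by simp
  have ks: "k summable_on rcosets L"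
    using fibre_constant(1)[of k, OF k_fibre] majorant_sq_summable[OF rd f \<xi>] by blast
  define g where "g C' = (cmod (hecke_conv G L f \<xi> C'))\<^sup>2" for C'
  have g_le: "g C' \<le> k C'" if "C' \<in> rcosets L" for C'
    unfolding g_def k_def using hecke_conv_le_majorant[OF f that] by (intro power_mono) auto
  have gs: "g summable_on rcosets L"
    by (rule summable_on_comparison_test[OF ks]) (use g_le in \<open>auto simp: g_def\<close>)
  have "(l2_norm G L (hecke_conv G L f \<xi>))\<^sup>2 = infsum g (rcosets L)"
    unfolding l2_norm_def g_def by (simp add: infsum_nonneg)
  also have "\<dots> \<le> infsum k (rcosets L)" by (rule infsum_mono[OF gs ks g_le])
  also have "\<dots> = real (card A) * infsum (\<lambda>C. (majorant f \<xi> C)\<^sup>2) (rcosets H)"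
    using fibre_constant(2)[of k, OF k_fibre] by simp
  also have "infsum (\<lambda>C. (majorant f \<xi> C)\<^sup>2) (rcosets H)
      = infsum (\<lambda>C. (cmod (hecke_conv G H (pushforward f) (fibre_l2 \<xi>) C))\<^sup>2) (rcosets H)"
    by (rule infsum_cong) (simp add: hecke_conv_pushforward[OF f] majorant_nonneg)
  also have "\<dots> = (l2_norm G H (hecke_conv G H (pushforward f) (fibre_l2 \<xi>)))\<^sup>2"
    unfolding l2_norm_def by (simp add: infsum_nonneg)
  finally show ?thesis .
qed

lemma rd_inequality_subgroup:
  assumes rd: "rd_inequality G H l s c" and c: "c \<ge> 0"
  shows "rd_inequality G L l s (c * real (card A) ^ 2)"
  unfolding rd_inequality_def
proof (intro ballI)
  fix f \<xi> assume f: "f \<in> hecke_algebra G L" and \<xi>: "\<xi> \<in> l2_cosets G L"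
  define n where "n = real (card A)"
  define W where "W = rd_weight G L f l s"
  have n: "n > 0" unfolding n_def using card_A_pos by simp
  have W: "W \<ge> 0" unfolding W_def by (rule rd_weight_nonneg, rule l_nonneg)
  have "sqrt (rd_weight G H (pushforward f) l s) \<le> sqrt (n ^ 3 * W)"
    using rd_weight_pushforward_le[OF f] unfolding n_def W_def by (rule real_sqrt_le_mono)
  also have "\<dots> = n * sqrt n * sqrt W" using n by (simp add: real_sqrt_mult power3_eq_cube)
  finally have weight: "sqrt (rd_weight G H (pushforward f) l s) \<le> n * sqrt n * sqrt W" .
  have "l2_norm G H (hecke_conv G H (pushforward f) (fibre_l2 \<xi>))
      \<le> c * sqrt (rd_weight G H (pushforward f) l s) * l2_norm G L \<xi>"
    using rd pushforward_hecke_algebra[OF f] fibre_l2_l2_cosets[OF \<xi>] unfolding rd_inequality_def by metis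
  also have "\<dots> \<le> c * (n * sqrt n * sqrt W) * l2_norm G L \<xi>"
    using weight c l2_norm_nonneg[of G L \<xi>] by (intro mult_right_mono mult_left_mono) auto
  finally have H_bound: "l2_norm G H (hecke_conv G H (pushforward f) (fibre_l2 \<xi>))
      \<le> c * (n * sqrt n * sqrt W) * l2_norm G L \<xi>" .
  have sqrt_n: "(sqrt n)\<^sup>2 = n" using n by simp
  have "(l2_norm G L (hecke_conv G L f \<xi>))\<^sup>2
      \<le> n * (l2_norm G H (hecke_conv G H (pushforward f) (fibre_l2 \<xi>)))\<^sup>2"
    using sq_l2_norm_hecke_conv_le[OF rd f \<xi>] unfolding n_def .
  also have "\<dots> \<le> n * (c * (n * sqrt n * sqrt W) * l2_norm G L \<xi>)\<^sup>2"
    using n l2_norm_nonneg by (intro mult_left_mono power_mono[OF H_bound]) simp_all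
  also have "\<dots> = (c * n ^ 2 * sqrt W * l2_norm G L \<xi>)\<^sup>2"
    unfolding power_mult_distrib sqrt_n by (simp add: power2_eq_square mult_ac)
  finally have "(l2_norm G L (hecke_conv G L f \<xi>))\<^sup>2 \<le> (c * n ^ 2 * sqrt W * l2_norm G L \<xi>)\<^sup>2" .
  moreover have "0 \<le> c * n ^ 2 * sqrt W * l2_norm G L \<xi>" using c W l2_norm_nonneg[of G L \<xi>] by simp
  ultimately show "l2_norm G L (hecke_conv G L f \<xi>) \<le> c * real (card A) ^ 2 * sqrt (rd_weight G L f l s) * l2_norm G L \<xi>"
    unfolding n_def W_def by (rule power2_le_imp_le)
qed

end

section \<open>Commensurable Hecke subgroups\<close>

lemma (in group) coset_transversal_index_cosets:
  assumes H: "subgroup H G" and L: "subgroup L G" and "L \<subseteq> H" and "finite (index_cosets G H L)"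
  shows "coset_transversal G H L (coset_rep ` index_cosets G H L)"
proof -
  have L_coset: "L #> h \<in> rcosets L" if "h \<in> H" for h
    using subgroup_rcosetsI[OF L] subgroup.mem_carrier[OF H that] by blast
  show ?thesis
  proof (rule coset_transversal.intro[OF is_group], rule coset_transversal_axioms.intro)
    show "subgroup H G" "subgroup L G" "L \<subseteq> H" "finite (coset_rep ` index_cosets G H L)"
      using assms by simp_all
    show "coset_rep ` index_cosets G H L \<subseteq> H"
    proof
      fix a assume "a \<in> coset_rep ` index_cosets G H L"
      then obtain h where h: "h \<in> H" "a = coset_rep (L #> h)" unfolding index_cosets_def by blast
      then have "a \<in> L #> h" using coset_rep_mem(1)[OF L L_coset[OF h(1)]] by simp
      then obtain k where "k \<in> L" "a = k \<otimes> h" by (auto simp: r_coset_mem_iff)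
      then show "a \<in> H" using subgroup.m_closed[OF H] assms(3) h(1) by blast
    qed
    show "\<exists>a\<in>coset_rep ` index_cosets G H L. L #> h = L #> a" if "h \<in> H" for h
      using coset_rep_mem(3)[OF L L_coset[OF that]] that unfolding index_cosets_def by force
    fix a b assume "a \<in> coset_rep ` index_cosets G H L" "b \<in> coset_rep ` index_cosets G H L"
      and eq: "L #> a = L #> b"
    then obtain h1 h2 where "h1 \<in> H" "a = coset_rep (L #> h1)" "h2 \<in> H" "b = coset_rep (L #> h2)"
      unfolding index_cosets_def by blast
    then show "a = b" using eq coset_rep_mem(3)[OF L L_coset] by metis
  qed
qed

lemma length_function_subgroup:
  "length_function G T H l \<Longrightarrow> L \<subseteq> H \<Longrightarrow> length_function G T L l"
  unfolding length_function_def by blast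

lemma property_RD_finite_index_subgroup:
  assumes "group G" and RD: "property_RD G T H" and hecke: "hecke_subgroup G H"
    and sub_L: "subgroup L G" and L_le_H: "L \<subseteq> H" and fin: "finite (index_cosets G H L)"
  shows "property_RD G T L"
proof -
  obtain l s c where len: "length_function G T H l" and s: "s > 0" and c: "c > 0"
    and rd: "rd_inequality G H l s c"
    using RD unfolding property_RD_iff_rd_inequality by blast
  have "subgroup H G" using hecke unfolding hecke_subgroup_def by blast
  interpret hecke_transversal_length G H L "coset_rep ` index_cosets G H L" l
    using group.coset_transversal_index_cosets[OF assms(1) \<open>subgroup H G\<close> sub_L L_le_H fin] len hecke
    unfolding hecke_transversal_length_def hecke_transversal_length_axioms_def length_function_def
    by blast
  have "rd_inequality G L l s (c * real (card (coset_rep ` index_cosets G H L)) ^ 2)"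
    using rd_inequality_subgroup[OF rd] c by simp
  moreover have "c * real (card (coset_rep ` index_cosets G H L)) ^ 2 > 0" using c card_A_pos by simp
  ultimately show ?thesis
    unfolding property_RD_iff_rd_inequality using length_function_subgroup[OF len L_le_H] s by blast
qed

lemma property_RD_finite_index_supergroup:
  assumes tg: "topological_group G T" and open_K: "openin T K" and sub_K: "subgroup K G"
    and RD: "property_RD G T L" and sub_L: "subgroup L G" and L_le_K: "L \<subseteq> K"
    and fin: "finite (index_cosets G K L)"
  shows "property_RD G T K"
proof -
  have "group G" using tg unfolding topological_group_def by blast
  obtain l s c where len: "length_function G T L l" and s: "s > 0" and c: "c > 0"
    and rd: "rd_inequality G L l s c"
    using RD unfolding property_RD_iff_rd_inequality by blast
  interpret transversal_length G K L "coset_rep ` index_cosets G K L" l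
    using group.coset_transversal_index_cosets[OF \<open>group G\<close> sub_K sub_L L_le_K fin] len
    unfolding transversal_length_def transversal_length_axioms_def length_function_def
    by blast
  have "length_function G T K induced_length"
    using induced_length_length_function[OF tg open_K] len unfolding length_function_def by blast
  moreover have "rd_inequality G K induced_length s
      (c * (1 + transversal_bound) powr s / sqrt (real (card (coset_rep ` index_cosets G K L))))"
    by (rule rd_inequality_induced[OF rd s c])
  moreover have "c * (1 + transversal_bound) powr s / sqrt (real (card (coset_rep ` index_cosets G K L))) > 0"
    using c card_A_pos transversal_bound_nonneg by simp
  ultimately show ?thesis unfolding property_RD_iff_rd_inequality using s by blast
qed

theorem corollary2p13:
  fixes G :: "('a, 'b) monoid_scheme" and T :: "'a topology" and H K :: "'a set"
  assumes "topological_group G T"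
    and "openin T H" and "openin T K"
    and "hecke_subgroup G H" and "hecke_subgroup G K"
    and "commensurable G H K"
  shows "property_RD G T H \<longleftrightarrow> property_RD G T K"
proof -
  have group: "group G" using assms(1) unfolding topological_group_def by blast
  have H: "subgroup H G" and K: "subgroup K G" using assms(4,5) unfolding hecke_subgroup_def by auto
  have L: "subgroup (H \<inter> K) G" using group.subgroups_Inter_pair[OF group H K] .
  have fin: "finite (index_cosets G H (H \<inter> K))" "finite (index_cosets G K (K \<inter> H))"
    using assms(6) unfolding commensurable_def by (simp_all add: Int_commute)
  show ?thesis
  proof
    assume "property_RD G T H"
    then have "property_RD G T (H \<inter> K)"
      using property_RD_finite_index_subgroup[OF group _ assms(4) L] fin by blast
    then show "property_RD G T K"
      using property_RD_finite_index_supergroup[OF assms(1,3) K _ L] fin by (simp add: Int_commute)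
  next
    assume "property_RD G T K"
    then have "property_RD G T (K \<inter> H)"
      using property_RD_finite_index_subgroup[OF group _ assms(5)] L fin by (simp add: Int_commute)
    then show "property_RD G T H"
      using property_RD_finite_index_supergroup[OF assms(1,2) H _ _ _ fin(1)] L by (simp add: Int_commute)
  qed
qed

end
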